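(* (1) The Holevo–Werner channel $W_5^-$ has an exact factorization through $M_5(\mathbb{C})\otimes M_4(\mathbb{C})$, i.e. there is a unitary $u\in M_5(\mathbb{C})\otimes M_4(\mathbb{C})$ with $W_5^-(x)=(\mathrm{id}_5\otimes\tau_4)(u^*(x\otimes 1_4)u)$ for all $x\in M_5(\mathbb{C})$. (2) For every odd integer $n\geq 5$, $W_n^-$ is factorizable of degree $4$, i.e. $W_n^-\otimes S_4\in\mathrm{conv}(\mathrm{Aut}(M_n(\mathbb{C})\otimes M_4(\mathbb{C})))$.
   Context: For $n\geq 2$, the Holevo–Werner channel $W_n^-:M_n(\mathbb{C})\to M_n(\mathbb{C})$ is $W_n^-(x)=\frac{1}{n-1}(\mathrm{Tr}_n(x)1_n-x^t)$, where $\mathrm{Tr}_n$ is the (non-normalized) trace and $x^t$ the transpose. $\tau_k$ is the normalized trace on $M_k(\mathbb{C})$ and $S_k(y)=\tau_k(y)1_k$ is the completely depolarizing channel on $M_k(\mathbb{C})$. $\mathrm{Aut}(M_m(\mathbb{C}))$ is the set of maps $x\mapsto u^*xu$ with $u$ unitary, $\mathrm{conv}$ denotes convex hull, and $M_n(\mathbb{C})\otimes M_4(\mathbb{C})$ is identified with $M_{4n}(\mathbb{C})$. *)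

theory Defs
  imports "Jordan_Normal_Form.Matrix"
begin

text \<open>Complex n x n matrices are modelled as JNF matrices in carrier_mat n n.
  M_n tensor M_k is identified with M_(n*k) via the index (i,a) |-> i*k + a
  (Kronecker product convention).\<close>

definition adj :: "complex mat \<Rightarrow> complex mat" where
  "adj A = mat (dim_col A) (dim_row A) (\<lambda>(i,j). cnj (A $$ (j,i)))"

definition unitary :: "nat \<Rightarrow> complex mat \<Rightarrow> bool" where
  "unitary n U \<longleftrightarrow> U \<in> carrier_mat n n \<and> adj U * U = 1\<^sub>m n \<and> U * adj U = 1\<^sub>m n"

definition tr :: "complex mat \<Rightarrow> complex" where
  "tr A = (\<Sum>i<dim_row A. A $$ (i,i))"

definition kron :: "nat \<Rightarrow> nat \<Rightarrow> complex mat \<Rightarrow> complex mat \<Rightarrow> complex mat" where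
  "kron n k A B = mat (n*k) (n*k)
     (\<lambda>(p,q). A $$ (p div k, q div k) * B $$ (p mod k, q mod k))"

definition unit_mat :: "nat \<Rightarrow> nat \<Rightarrow> nat \<Rightarrow> complex mat" where
  "unit_mat n i j = mat n n (\<lambda>(p,q). if p = i \<and> q = j then 1 else 0)"

definition holevo_werner :: "nat \<Rightarrow> complex mat \<Rightarrow> complex mat" where
  "holevo_werner n x = (1 / (of_nat n - 1)) \<cdot>\<^sub>m (tr x \<cdot>\<^sub>m 1\<^sub>m n - transpose_mat x)"

definition ntr :: "nat \<Rightarrow> complex mat \<Rightarrow> complex" where
  "ntr k y = tr y / of_nat k"

definition depol :: "nat \<Rightarrow> complex mat \<Rightarrow> complex mat" where
  "depol k y = ntr k y \<cdot>\<^sub>m 1\<^sub>m k"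

definition id_tensor_ntr :: "nat \<Rightarrow> nat \<Rightarrow> complex mat \<Rightarrow> complex mat" where
  "id_tensor_ntr n k Y = mat n n
     (\<lambda>(i,j). (\<Sum>a<k. Y $$ (i*k + a, j*k + a)) / of_nat k)"

definition tensor_map :: "nat \<Rightarrow> nat \<Rightarrow> (complex mat \<Rightarrow> complex mat)
     \<Rightarrow> (complex mat \<Rightarrow> complex mat) \<Rightarrow> complex mat \<Rightarrow> complex mat" where
  "tensor_map n k \<Phi> \<Psi> Z = mat (n*k) (n*k) (\<lambda>(p,q).
     \<Sum>i<n. \<Sum>j<n. \<Sum>a<k. \<Sum>b<k.
       Z $$ (i*k + a, j*k + b) * \<Phi> (unit_mat n i j) $$ (p div k, q div k)
         * \<Psi> (unit_mat k a b) $$ (p mod k, q mod k))"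

definition in_conv_Aut :: "nat \<Rightarrow> (complex mat \<Rightarrow> complex mat) \<Rightarrow> bool" where
  "in_conv_Aut m T \<longleftrightarrow>
     (\<exists>N (c :: nat \<Rightarrow> real) (u :: nat \<Rightarrow> complex mat).
        (\<forall>l<N. c l \<ge> 0 \<and> unitary m (u l)) \<and> (\<Sum>l<N. c l) = 1 \<and>
        (\<forall>x \<in> carrier_mat m m.
           T x = mat m m (\<lambda>(p,q). \<Sum>l<N. complex_of_real (c l) * (adj (u l) * x * u l) $$ (p,q))))"

definition HW_factorizable_deg :: "nat \<Rightarrow> nat \<Rightarrow> bool" where
  "HW_factorizable_deg n k \<longleftrightarrow>
     in_conv_Aut (n*k) (tensor_map n k (holevo_werner n) (depol k))"

end

(*
  A map Y |-> (id (x) tau_k)(V^* (Y (x) 1) V) on M_n is determined by its kernel: the entry (r, s) of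
  the image is sum_{t, t'} Y_{t t'} kappa(t, t', r, s).  W_n^- is the map with kernel
  ((t = t' and r = s) - (t = s and t' = r)) / (n - 1).

  For n = 5 an explicit unitary U5 in M_5 (x) M_4, with entries in Z[omega, i] / 2, has exactly this
  kernel; both facts are identities in Z[omega, i] and are checked by evaluation.

  For odd n >= 5 take U5 on the first five blocks and swap the remaining blocks in pairs with
  opposite signs.  The kernel of this unitary vanishes at (x, x, x, x) and (x, y, x, y), changes sign
  from (y, y, x, x) to (y, x, x, y), and satisfies sum_t kappa(t, t, r, r) = 1.  Averaging over
  conjugations by signed permutations of the first tensor factor averages the kernels: the signs
  kill every index quadruple that is not made of two equal pairs, and permutation invariance with
  the trace condition leaves exactly the kernel of W_n^-.  Hence W_n^- (x) S_4 is the average of the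
  maps E o Ad(V) o E with E = (id (x) tau_4) (x) 1, and E is the average of the conjugations by
  1 (x) sigma over sixteen real Pauli-type unitaries sigma.  Since conv(Aut) is closed under
  composition and convex combinations, W_n^- (x) S_4 lies in it.
*)

theory Submission
  imports Defs "Jordan_Normal_Form.Determinant" "HOL-Combinatorics.Permutations"
begin

section \<open>Block matrices\<close>

lemma index_mult_mat_sum:
  assumes "A \<in> carrier_mat n m" "B \<in> carrier_mat m k" "i < n" "j < k"
  shows "(A * B) $$ (i, j) = (\<Sum>l<m. A $$ (i, l) * B $$ (l, j))"
  using assms by (auto simp: scalar_prod_def atLeast0LessThan intro!: sum.cong)

lemma block_index_less: "x < n \<Longrightarrow> c < k \<Longrightarrow> x * k + c < n * (k::nat)"
proof -
  assume "x < n" "c < k"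
  then have "x * k + c < Suc x * k" by simp
  also have "\<dots> \<le> n * k" using \<open>x < n\<close> by (intro mult_le_mono1) simp
  finally show ?thesis .
qed

lemma block_index_eq_iff: "c < k \<Longrightarrow> d < k \<Longrightarrow> x * k + c = y * k + (d::nat) \<longleftrightarrow> x = y \<and> c = d"
proof -
  assume "c < k" "d < k"
  then have "(x * k + c) div k = x" "(x * k + c) mod k = c" "(y * k + d) div k = y" "(y * k + d) mod k = d"
    by simp_all
  then show ?thesis by metis
qed

lemma sum_lessThan_mult:
  fixes n k :: nat
  shows "(\<Sum>p<n * k. f p) = (\<Sum>x<n. \<Sum>c<k. f (x * k + c))"
proof -
  have "(\<Sum>c<k. f (x * k + c)) = sum f {x * k..<x * k + k}" for x
    by (rule sum.reindex_bij_witness[of _ "\<lambda>p. p - x * k" "\<lambda>c. x * k + c"]) auto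
  then show ?thesis using sum.nat_group[of f k n] by simp
qed

lemma eq_block_matI:
  assumes "A \<in> carrier_mat (n * k) (n * k)" "B \<in> carrier_mat (n * k) (n * k)"
    and "\<And>x y c d. x < n \<Longrightarrow> y < n \<Longrightarrow> c < k \<Longrightarrow> d < k \<Longrightarrow>
           A $$ (x * k + c, y * k + d) = B $$ (x * k + c, y * k + d)"
  shows "A = B"
proof (rule eq_matI)
  have split: "p div k < n \<and> p mod k < k \<and> p = p div k * k + p mod k" if "p < n * k" for p
    using that by (cases "k = 0") (auto simp: less_mult_imp_div_less)
  fix p q assume "p < dim_row B" "q < dim_col B"
  then have "p < n * k" "q < n * k" using assms by auto
  then show "A $$ (p, q) = B $$ (p, q)" using assms(3) split by metis
qed (use assms in auto)

lemma adj_carrier_mat[simp]: "A \<in> carrier_mat n m \<Longrightarrow> adj A \<in> carrier_mat m n"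
  by (simp add: adj_def)

lemma dim_adj[simp]: "dim_row (adj A) = dim_col A" "dim_col (adj A) = dim_row A"
  by (simp_all add: adj_def)

lemma index_adj[simp]: "i < dim_col A \<Longrightarrow> j < dim_row A \<Longrightarrow> adj A $$ (i, j) = cnj (A $$ (j, i))"
  by (simp add: adj_def)

lemma adj_mult_mat:
  assumes "A \<in> carrier_mat n m" "B \<in> carrier_mat m k"
  shows "adj (A * B) = adj B * adj A"
proof (rule eq_matI)
  fix i j assume "i < dim_row (adj B * adj A)" "j < dim_col (adj B * adj A)"
  then have ij: "i < k" "j < n" using assms by auto
  have "adj (A * B) $$ (i, j) = cnj (\<Sum>l<m. A $$ (j, l) * B $$ (l, i))"
    using assms ij by (simp del: index_mult_mat(1) add: index_mult_mat_sum[OF assms(1,2) ij(2,1)])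
  also have "\<dots> = (adj B * adj A) $$ (i, j)"
    using assms ij by (simp del: index_mult_mat(1) add: index_mult_mat_sum[of _ k m _ n] mult.commute)
  finally show "adj (A * B) $$ (i, j) = (adj B * adj A) $$ (i, j)" .
qed (use assms in auto)

lemma unitaryI_left:
  assumes "V \<in> carrier_mat m m" "adj V * V = 1\<^sub>m m"
  shows "unitary m V"
  using assms mat_mult_left_right_inverse[of "adj V" m V] by (auto simp: unitary_def)

lemma unitary_mult:
  assumes "unitary m A" "unitary m B"
  shows "unitary m (A * B)"
proof (rule unitaryI_left)
  have A: "A \<in> carrier_mat m m" "adj A * A = 1\<^sub>m m" and B: "B \<in> carrier_mat m m" "adj B * B = 1\<^sub>m m"
    using assms by (auto simp: unitary_def)
  then have aA: "adj A \<in> carrier_mat m m" and aB: "adj B \<in> carrier_mat m m" by auto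
  show AB: "A * B \<in> carrier_mat m m" using A B by simp
  have "adj A * (A * B) = B" using assoc_mult_mat[OF aA A(1) B(1)] A B by simp
  then have "adj B * adj A * (A * B) = 1\<^sub>m m" using assoc_mult_mat[OF aB aA AB] B by simp
  then show "adj (A * B) * (A * B) = 1\<^sub>m m" by (simp add: adj_mult_mat[OF A(1) B(1)])
qed

lemma conj_conj_mat:
  assumes X: "X \<in> carrier_mat m m" and A: "A \<in> carrier_mat m m" and B: "B \<in> carrier_mat m m"
  shows "adj B * (adj A * X * A) * B = adj (A * B) * X * (A * B)"
proof -
  have aA: "adj A \<in> carrier_mat m m" and aB: "adj B \<in> carrier_mat m m" using A B by auto
  have AX: "adj A * X \<in> carrier_mat m m" and BAX: "adj B * adj A * X \<in> carrier_mat m m"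
    using aA aB X by auto
  have "adj (A * B) * X * (A * B) = adj B * adj A * X * A * B"
    unfolding adj_mult_mat[OF A B] using assoc_mult_mat[OF BAX A B] by simp
  also have "\<dots> = adj B * (adj A * X) * A * B"
    using assoc_mult_mat[OF aB aA X] by simp
  also have "\<dots> = adj B * (adj A * X * A) * B"
    using assoc_mult_mat[OF aB AX A] by simp
  finally show ?thesis by simp
qed

lemma kron_carrier_mat[simp]: "kron n k A B \<in> carrier_mat (n * k) (n * k)"
  by (simp add: kron_def)

lemma index_kron:
  "x < n \<Longrightarrow> y < n \<Longrightarrow> c < k \<Longrightarrow> d < k \<Longrightarrow>
   kron n k A B $$ (x * k + c, y * k + d) = A $$ (x, y) * B $$ (c, d)"
  by (simp add: kron_def block_index_less)

lemma index_adj_mult_block: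
  assumes "V \<in> carrier_mat (n * k) (n * k)" "W \<in> carrier_mat (n * k) (n * k)" "p < n * k" "q < n * k"
  shows "(adj V * W) $$ (p, q) = (\<Sum>t<n. \<Sum>c<k. cnj (V $$ (t * k + c, p)) * W $$ (t * k + c, q))"
  using assms by (simp del: index_mult_mat
      add: index_mult_mat_sum[of _ "n * k" "n * k" _ "n * k"] sum_lessThan_mult block_index_less)

lemma index_conj_mat:
  assumes V: "V \<in> carrier_mat m m" and X: "X \<in> carrier_mat m m" and "p < m" "q < m"
  shows "(adj V * X * V) $$ (p, q) = (\<Sum>j<m. \<Sum>l<m. cnj (V $$ (j, p)) * X $$ (j, l) * V $$ (l, q))"
proof -
  have aV: "adj V \<in> carrier_mat m m" using V by simp
  have "(adj V * X * V) $$ (p, q) = (\<Sum>l<m. (adj V * X) $$ (p, l) * V $$ (l, q))"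
    using index_mult_mat_sum[OF mult_carrier_mat[OF aV X] V] assms by blast
  also have "\<dots> = (\<Sum>l<m. \<Sum>j<m. cnj (V $$ (j, p)) * X $$ (j, l) * V $$ (l, q))"
    using assms by (simp del: index_mult_mat(1) add: index_mult_mat_sum[OF aV X] sum_distrib_right)
  also have "\<dots> = (\<Sum>j<m. \<Sum>l<m. cnj (V $$ (j, p)) * X $$ (j, l) * V $$ (l, q))"
    by (rule sum.swap)
  finally show ?thesis .
qed

lemma index_conj_block:
  assumes "V \<in> carrier_mat (n * k) (n * k)" "X \<in> carrier_mat (n * k) (n * k)" "p < n * k" "q < n * k"
  shows "(adj V * X * V) $$ (p, q) = (\<Sum>t<n. \<Sum>c<k. \<Sum>t'<n. \<Sum>c'<k.
           cnj (V $$ (t * k + c, p)) * X $$ (t * k + c, t' * k + c') * V $$ (t' * k + c', q))"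
  by (simp only: index_conj_mat[OF assms] sum_lessThan_mult)

section \<open>Maps given by a kernel\<close>

definition kernel_map :: "nat \<Rightarrow> (nat \<Rightarrow> nat \<Rightarrow> nat \<Rightarrow> nat \<Rightarrow> complex) \<Rightarrow> complex mat \<Rightarrow> complex mat" where
  "kernel_map n \<kappa> Y = mat n n (\<lambda>(r, s). \<Sum>t<n. \<Sum>t'<n. Y $$ (t, t') * \<kappa> t t' r s)"

definition conj_kernel :: "nat \<Rightarrow> complex mat \<Rightarrow> nat \<Rightarrow> nat \<Rightarrow> nat \<Rightarrow> nat \<Rightarrow> complex" where
  "conj_kernel k V t t' r s =
     (\<Sum>d<k. \<Sum>c<k. cnj (V $$ (t * k + c, r * k + d)) * V $$ (t' * k + c, s * k + d)) / of_nat k"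

lemma kernel_map_cong:
  "(\<And>t t' r s. t < n \<Longrightarrow> t' < n \<Longrightarrow> r < n \<Longrightarrow> s < n \<Longrightarrow> \<kappa> t t' r s = \<kappa>' t t' r s) \<Longrightarrow>
   kernel_map n \<kappa> Y = kernel_map n \<kappa>' Y"
  by (auto simp: kernel_map_def intro!: eq_matI sum.cong)

lemma index_conj_kron_one:
  assumes V: "V \<in> carrier_mat (n * k) (n * k)" and Y: "Y \<in> carrier_mat n n"
    and p: "p < n * k" and q: "q < n * k"
  shows "(adj V * kron n k Y (1\<^sub>m k) * V) $$ (p, q) =
    (\<Sum>t<n. \<Sum>t'<n. Y $$ (t, t') * (\<Sum>c<k. cnj (V $$ (t * k + c, p)) * V $$ (t' * k + c, q)))"
proof -
  have "(adj V * kron n k Y (1\<^sub>m k) * V) $$ (p, q) =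
      (\<Sum>t<n. \<Sum>c<k. \<Sum>t'<n. cnj (V $$ (t * k + c, p)) * Y $$ (t, t') * V $$ (t' * k + c, q))"
    unfolding index_conj_block[OF V kron_carrier_mat p q]
  proof (intro sum.cong refl)
    fix t c t' assume "t \<in> {..<n}" "c \<in> {..<k}" "t' \<in> {..<n}"
    then have "(\<Sum>c'<k. cnj (V $$ (t * k + c, p)) * kron n k Y (1\<^sub>m k) $$ (t * k + c, t' * k + c') *
          V $$ (t' * k + c', q)) =
        (\<Sum>c'<k. if c' = c then cnj (V $$ (t * k + c, p)) * Y $$ (t, t') * V $$ (t' * k + c, q) else 0)"
      by (intro sum.cong refl) (auto simp: index_kron)
    then show "(\<Sum>c'<k. cnj (V $$ (t * k + c, p)) * kron n k Y (1\<^sub>m k) $$ (t * k + c, t' * k + c') *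
          V $$ (t' * k + c', q)) = cnj (V $$ (t * k + c, p)) * Y $$ (t, t') * V $$ (t' * k + c, q)"
      using \<open>c \<in> {..<k}\<close> by simp
  qed
  also have "\<dots> = (\<Sum>t<n. \<Sum>t'<n. \<Sum>c<k. cnj (V $$ (t * k + c, p)) * Y $$ (t, t') * V $$ (t' * k + c, q))"
    by (intro sum.cong refl sum.swap)
  finally show ?thesis
    by (simp add: sum_distrib_left mult.commute mult.left_commute)
qed

lemma id_tensor_ntr_conj_kron:
  assumes V: "V \<in> carrier_mat (n * k) (n * k)" and Y: "Y \<in> carrier_mat n n"
  shows "id_tensor_ntr n k (adj V * kron n k Y (1\<^sub>m k) * V) = kernel_map n (conj_kernel k V) Y"
proof (rule eq_matI)
  fix r s assume "r < dim_row (kernel_map n (conj_kernel k V) Y)" "s < dim_col (kernel_map n (conj_kernel k V) Y)"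
  then have rs: "r < n" "s < n" by (auto simp: kernel_map_def)
  have "id_tensor_ntr n k (adj V * kron n k Y (1\<^sub>m k) * V) $$ (r, s) = (\<Sum>a<k. \<Sum>t<n. \<Sum>t'<n.
      Y $$ (t, t') * (\<Sum>c<k. cnj (V $$ (t * k + c, r * k + a)) * V $$ (t' * k + c, s * k + a))) / of_nat k"
    using rs by (simp add: id_tensor_ntr_def index_conj_kron_one[OF V Y] block_index_less)
  also have "\<dots> = (\<Sum>t<n. \<Sum>t'<n. \<Sum>a<k.
      Y $$ (t, t') * (\<Sum>c<k. cnj (V $$ (t * k + c, r * k + a)) * V $$ (t' * k + c, s * k + a))) / of_nat k"
    by (simp only: sum.swap[of _ "{..<k}"] sum.swap[of _ "{..<k}" "{..<n}"])
  also have "\<dots> = kernel_map n (conj_kernel k V) Y $$ (r, s)"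
    using rs by (simp add: kernel_map_def conj_kernel_def sum_divide_distrib sum_distrib_left)
  finally show "id_tensor_ntr n k (adj V * kron n k Y (1\<^sub>m k) * V) $$ (r, s) =
      kernel_map n (conj_kernel k V) Y $$ (r, s)" .
qed (auto simp: id_tensor_ntr_def kernel_map_def)

lemma conj_kernel_diag_sum:
  assumes V: "V \<in> carrier_mat (n * k) (n * k)" and "adj V * V = 1\<^sub>m (n * k)" and "0 < k" "r < n"
  shows "(\<Sum>t<n. conj_kernel k V t t r r) = 1"
proof -
  have "(\<Sum>t<n. conj_kernel k V t t r r) =
      (\<Sum>d<k. \<Sum>t<n. \<Sum>c<k. cnj (V $$ (t * k + c, r * k + d)) * V $$ (t * k + c, r * k + d)) / of_nat k"
    by (simp add: conj_kernel_def sum_divide_distrib sum.swap[of _ "{..<k}" "{..<n}"])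
  also have "\<dots> = (\<Sum>d<k. (adj V * V) $$ (r * k + d, r * k + d)) / of_nat k"
    using V \<open>r < n\<close> by (simp del: index_mult_mat(1) add: index_adj_mult_block[OF V V] block_index_less)
  also have "\<dots> = 1" using assms by (simp add: block_index_less)
  finally show ?thesis .
qed

definition hw_kernel :: "nat \<Rightarrow> nat \<Rightarrow> nat \<Rightarrow> nat \<Rightarrow> nat \<Rightarrow> complex" where
  "hw_kernel n t t' r s =
     ((if t = t' \<and> r = s then 1 else 0) - (if t = s \<and> t' = r then 1 else 0)) / (of_nat n - 1)"

lemma holevo_werner_eq_kernel_map:
  assumes Y: "Y \<in> carrier_mat n n"
  shows "holevo_werner n Y = kernel_map n (hw_kernel n) Y"
proof (rule eq_matI)
  fix r s assume "r < dim_row (kernel_map n (hw_kernel n) Y)" "s < dim_col (kernel_map n (hw_kernel n) Y)"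
  then have rs: "r < n" "s < n" by (auto simp: kernel_map_def)
  have diag: "(\<Sum>t<n. \<Sum>t'<n. Y $$ (t, t') * (if t = t' \<and> r = s then 1 else 0)) =
      (if r = s then tr Y else 0)"
    using Y by (simp add: tr_def if_distrib[of "(*) _"] sum.delta cong: if_cong)
  have swap: "(\<Sum>t<n. \<Sum>t'<n. Y $$ (t, t') * (if t = s \<and> t' = r then 1 else 0)) = Y $$ (s, r)"
  proof -
    have "(\<Sum>t'<n. Y $$ (t, t') * (if t = s \<and> t' = r then 1 else 0)) = (if t = s then Y $$ (s, r) else 0)"
      for t using rs by (auto simp: if_distrib[of "(*) _"] cong: if_cong)
    then show ?thesis using rs by simp
  qed
  have "kernel_map n (hw_kernel n) Y $$ (r, s) =
      ((\<Sum>t<n. \<Sum>t'<n. Y $$ (t, t') * (if t = t' \<and> r = s then 1 else 0)) -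
       (\<Sum>t<n. \<Sum>t'<n. Y $$ (t, t') * (if t = s \<and> t' = r then 1 else 0))) / (of_nat n - 1)"
    using rs by (simp add: kernel_map_def hw_kernel_def right_diff_distrib sum_subtractf
        diff_divide_distrib sum_divide_distrib del: mult_zero_right mult_1_right)
  also have "\<dots> = ((if r = s then tr Y else 0) - Y $$ (s, r)) / (of_nat n - 1)"
    by (simp only: diag swap)
  finally have "kernel_map n (hw_kernel n) Y $$ (r, s) = ((if r = s then tr Y else 0) - Y $$ (s, r)) / (of_nat n - 1)" .
  then show "holevo_werner n Y $$ (r, s) = kernel_map n (hw_kernel n) Y $$ (r, s)"
    using Y rs by (simp add: holevo_werner_def)
qed (use Y in \<open>auto simp: holevo_werner_def kernel_map_def\<close>)

lemma unit_mat_carrier_mat[simp]: "unit_mat m i j \<in> carrier_mat m m"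
  by (simp add: unit_mat_def)

lemma tr_unit_mat: "i < m \<Longrightarrow> j < m \<Longrightarrow> tr (unit_mat m i j) = (if i = j then 1 else 0)"
  by (cases "i = j") (auto simp: tr_def unit_mat_def intro!: sum.neutral)

lemma index_kernel_map_unit_mat:
  assumes "i < n" "j < n" "x < n" "y < n"
  shows "kernel_map n \<kappa> (unit_mat n i j) $$ (x, y) = \<kappa> i j x y"
proof -
  have inner: "(\<Sum>t'<n. (if t = i \<and> t' = j then 1 else 0) * \<kappa> t t' x y) = (if t = i then \<kappa> i j x y else 0)"
    for t using assms by (cases "t = i") (simp_all add: if_distrib[of "\<lambda>z. z * _"] cong: if_cong)
  have "kernel_map n \<kappa> (unit_mat n i j) $$ (x, y) =
      (\<Sum>t<n. \<Sum>t'<n. (if t = i \<and> t' = j then 1 else 0) * \<kappa> t t' x y)"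
    using assms by (simp add: kernel_map_def unit_mat_def)
  also have "\<dots> = (\<Sum>t<n. if t = i then \<kappa> i j x y else 0)" by (simp only: inner)
  finally show ?thesis using assms by simp
qed

lemma tensor_map_holevo_werner_depol:
  assumes X: "X \<in> carrier_mat (n * k) (n * k)"
  shows "tensor_map n k (holevo_werner n) (depol k) X =
    kron n k (holevo_werner n (id_tensor_ntr n k X)) (1\<^sub>m k)"
proof (rule eq_block_matI)
  fix x y a b :: nat assume xy: "x < n" "y < n" "a < k" "b < k"
  have W: "holevo_werner n (unit_mat n i j) $$ (x, y) = hw_kernel n i j x y" if "i < n" "j < n" for i j
    using that xy by (simp add: holevo_werner_eq_kernel_map[of _ n] index_kernel_map_unit_mat)
  have S: "depol k (unit_mat k a' b') $$ (a, b) = (if a' = b' \<and> a = b then 1 / of_nat k else 0)"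
    if "a' < k" "b' < k" for a' b'
    using that xy by (simp add: depol_def ntr_def tr_unit_mat)
  have "tensor_map n k (holevo_werner n) (depol k) X $$ (x * k + a, y * k + b) =
      (\<Sum>i<n. \<Sum>j<n. \<Sum>a'<k. \<Sum>b'<k. X $$ (i * k + a', j * k + b') * hw_kernel n i j x y *
        (if b' = a' then (if a = b then 1 / of_nat k else 0) else 0))"
    using xy by (auto simp: tensor_map_def block_index_less W S intro!: sum.cong)
  also have "\<dots> = (if a = b then (\<Sum>i<n. \<Sum>j<n.
      ((\<Sum>a'<k. X $$ (i * k + a', j * k + a')) / of_nat k) * hw_kernel n i j x y) else 0)"
    by (simp add: if_distrib[of "\<lambda>z. _ * z"] sum.delta' sum_divide_distrib sum_distrib_right cong: if_cong)
  also have "\<dots> = kron n k (holevo_werner n (id_tensor_ntr n k X)) (1\<^sub>m k) $$ (x * k + a, y * k + b)"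
    using xy by (simp add: index_kron holevo_werner_eq_kernel_map[of _ n] id_tensor_ntr_def kernel_map_def)
  finally show "tensor_map n k (holevo_werner n) (depol k) X $$ (x * k + a, y * k + b) =
      kron n k (holevo_werner n (id_tensor_ntr n k X)) (1\<^sub>m k) $$ (x * k + a, y * k + b)" .
qed (simp_all add: tensor_map_def)

section \<open>Mixed unitary maps\<close>

definition mat_comb :: "nat \<Rightarrow> 'i set \<Rightarrow> ('i \<Rightarrow> complex) \<Rightarrow> ('i \<Rightarrow> complex mat) \<Rightarrow> complex mat" where
  "mat_comb m I a F = mat m m (\<lambda>(p, q). \<Sum>i\<in>I. a i * F i $$ (p, q))"

lemma mat_comb_carrier_mat[simp]: "mat_comb m I a F \<in> carrier_mat m m"
  by (simp add: mat_comb_def)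

lemma dim_mat_comb[simp]: "dim_row (mat_comb m I a F) = m" "dim_col (mat_comb m I a F) = m"
  by (simp_all add: mat_comb_def)

lemma index_mat_comb: "p < m \<Longrightarrow> q < m \<Longrightarrow> mat_comb m I a F $$ (p, q) = (\<Sum>i\<in>I. a i * F i $$ (p, q))"
  by (simp add: mat_comb_def)

lemma mat_comb_cong: "(\<And>i. i \<in> I \<Longrightarrow> F i = G i) \<Longrightarrow> mat_comb m I a F = mat_comb m I a G"
  by (auto simp: mat_comb_def intro!: eq_matI sum.cong)

lemma mat_comb_reindex:
  assumes "bij_betw h A B"
  shows "mat_comb m A (\<lambda>i. a (h i)) (\<lambda>i. F (h i)) = mat_comb m B a F"
proof (rule eq_matI)
  fix p q assume "p < dim_row (mat_comb m B a F)" "q < dim_col (mat_comb m B a F)"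
  then show "mat_comb m A (\<lambda>i. a (h i)) (\<lambda>i. F (h i)) $$ (p, q) = mat_comb m B a F $$ (p, q)"
    using sum.reindex_bij_betw[OF assms, of "\<lambda>i. a i * F i $$ (p, q)"] by (simp add: index_mat_comb)
qed auto

lemma mat_comb_mat_comb:
  assumes "finite J" "\<And>j. j \<in> J \<Longrightarrow> finite (I j)"
  shows "mat_comb m J a (\<lambda>j. mat_comb m (I j) (b j) (F j)) =
    mat_comb m (Sigma J I) (\<lambda>(j, i). a j * b j i) (\<lambda>(j, i). F j i)"
  using assms by (auto simp: mat_comb_def sum_distrib_left sum.Sigma mult.assoc intro!: eq_matI sum.cong)

lemma conj_mat_comb:
  assumes V: "V \<in> carrier_mat m m" and F: "\<And>i. i \<in> I \<Longrightarrow> F i \<in> carrier_mat m m"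
  shows "adj V * mat_comb m I a F * V = mat_comb m I a (\<lambda>i. adj V * F i * V)"
proof (rule eq_matI)
  fix p q assume "p < dim_row (mat_comb m I a (\<lambda>i. adj V * F i * V))"
    "q < dim_col (mat_comb m I a (\<lambda>i. adj V * F i * V))"
  then have pq: "p < m" "q < m" by auto
  have "(adj V * mat_comb m I a F * V) $$ (p, q) =
      (\<Sum>j<m. \<Sum>l<m. \<Sum>i\<in>I. a i * (cnj (V $$ (j, p)) * F i $$ (j, l) * V $$ (l, q)))"
    using pq by (simp add: index_conj_mat[OF V] index_mat_comb sum_distrib_left sum_distrib_right
        mult.commute mult.left_commute)
  also have "\<dots> = (\<Sum>i\<in>I. a i * (\<Sum>j<m. \<Sum>l<m. cnj (V $$ (j, p)) * F i $$ (j, l) * V $$ (l, q)))"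
    by (simp add: sum_distrib_left sum.swap[of _ I])
  also have "\<dots> = mat_comb m I a (\<lambda>i. adj V * F i * V) $$ (p, q)"
    using pq F by (simp add: index_mat_comb index_conj_mat[OF V])
  finally show "(adj V * mat_comb m I a F * V) $$ (p, q) = mat_comb m I a (\<lambda>i. adj V * F i * V) $$ (p, q)" .
qed (use V in auto)

definition conv_Aut_rep ::
    "nat \<Rightarrow> 'i set \<Rightarrow> ('i \<Rightarrow> real) \<Rightarrow> ('i \<Rightarrow> complex mat) \<Rightarrow> (complex mat \<Rightarrow> complex mat) \<Rightarrow> bool" where
  "conv_Aut_rep m I c u T \<longleftrightarrow> finite I \<and> (\<forall>i\<in>I. 0 \<le> c i \<and> unitary m (u i)) \<and> sum c I = 1 \<and>
     (\<forall>x\<in>carrier_mat m m. T x = mat_comb m I (\<lambda>i. complex_of_real (c i)) (\<lambda>i. adj (u i) * x * u i))"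

lemma in_conv_Aut_iff_rep: "in_conv_Aut m T \<longleftrightarrow> (\<exists>(N::nat) c u. conv_Aut_rep m {..<N} c u T)"
  unfolding in_conv_Aut_def conv_Aut_rep_def mat_comb_def Ball_def lessThan_iff by simp

lemma conv_Aut_repI:
  assumes "finite I" "\<And>i. i \<in> I \<Longrightarrow> 0 \<le> c i" "\<And>i. i \<in> I \<Longrightarrow> unitary m (u i)" "sum c I = 1"
    and "\<And>x. x \<in> carrier_mat m m \<Longrightarrow> T x = mat_comb m I (\<lambda>i. complex_of_real (c i)) (\<lambda>i. adj (u i) * x * u i)"
  shows "conv_Aut_rep m I c u T"
  using assms by (simp add: conv_Aut_rep_def)

lemma in_conv_Aut_obtain:
  assumes "in_conv_Aut m T"
  obtains I :: "nat set" and c u where "conv_Aut_rep m I c u T"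
  using assms in_conv_Aut_iff_rep by blast

lemma in_conv_Aut_intro:
  assumes rep: "conv_Aut_rep m I c u T"
  shows "in_conv_Aut m T"
proof -
  from rep have "finite I" by (simp add: conv_Aut_rep_def)
  then obtain h where h: "bij_betw h {..<card I} I"
    using ex_bij_betw_nat_finite lessThan_atLeast0 by metis
  have "conv_Aut_rep m {..<card I} (\<lambda>l. c (h l)) (\<lambda>l. u (h l)) T"
  proof (rule conv_Aut_repI)
    fix l assume "l \<in> {..<card I}"
    then have "h l \<in> I" using bij_betwE[OF h] by blast
    then show "0 \<le> c (h l)" "unitary m (u (h l))" using rep by (simp_all add: conv_Aut_rep_def)
  next
    show "(\<Sum>l<card I. c (h l)) = 1" using rep sum.reindex_bij_betw[OF h, of c] by (simp add: conv_Aut_rep_def)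
  next
    fix x :: "complex mat" assume "x \<in> carrier_mat m m"
    then show "T x = mat_comb m {..<card I} (\<lambda>l. complex_of_real (c (h l))) (\<lambda>l. adj (u (h l)) * x * u (h l))"
      using rep mat_comb_reindex[OF h, of m "\<lambda>i. complex_of_real (c i)" "\<lambda>i. adj (u i) * x * u i"]
      by (simp add: conv_Aut_rep_def)
  qed simp
  then show ?thesis using in_conv_Aut_iff_rep by blast
qed

lemma in_conv_Aut_cong:
  "in_conv_Aut m T \<Longrightarrow> (\<And>x. x \<in> carrier_mat m m \<Longrightarrow> T' x = T x) \<Longrightarrow> in_conv_Aut m T'"
  by (auto simp: in_conv_Aut_def)

lemma in_conv_Aut_conj: "unitary m U \<Longrightarrow> in_conv_Aut m (\<lambda>x. adj U * x * U)"
  by (rule in_conv_Aut_intro[of m "{()}" "\<lambda>_. 1" "\<lambda>_. U"])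
    (auto simp: conv_Aut_rep_def mat_comb_def unitary_def intro!: eq_matI)

lemma conj_conv_Aut_rep:
  assumes rep: "conv_Aut_rep m I c u T" and x: "x \<in> carrier_mat m m" and V: "V \<in> carrier_mat m m"
  shows "adj V * T x * V = mat_comb m I (\<lambda>i. complex_of_real (c i)) (\<lambda>i. adj (u i * V) * x * (u i * V))"
proof -
  have u: "u i \<in> carrier_mat m m" if "i \<in> I" for i
    using rep that by (simp add: conv_Aut_rep_def unitary_def)
  then have F: "adj (u i) * x * u i \<in> carrier_mat m m" if "i \<in> I" for i
    using that x by (metis adj_carrier_mat mult_carrier_mat)
  have "adj V * T x * V = mat_comb m I (\<lambda>i. complex_of_real (c i)) (\<lambda>i. adj V * (adj (u i) * x * u i) * V)"
    using rep x conj_mat_comb[OF V F] by (simp add: conv_Aut_rep_def)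
  also have "\<dots> = mat_comb m I (\<lambda>i. complex_of_real (c i)) (\<lambda>i. adj (u i * V) * x * (u i * V))"
    by (rule mat_comb_cong) (simp add: conj_conj_mat[OF x u V])
  finally show ?thesis .
qed

lemma in_conv_Aut_comp:
  assumes "in_conv_Aut m T1" "in_conv_Aut m T2"
  shows "in_conv_Aut m (\<lambda>x. T2 (T1 x))"
proof -
  obtain I1 :: "nat set" and c1 u1 where r1: "conv_Aut_rep m I1 c1 u1 T1"
    using assms(1) by (rule in_conv_Aut_obtain)
  obtain I2 :: "nat set" and c2 u2 where r2: "conv_Aut_rep m I2 c2 u2 T2"
    using assms(2) by (rule in_conv_Aut_obtain)
  show ?thesis
  proof (rule in_conv_Aut_intro)
    show "conv_Aut_rep m (I2 \<times> I1) (\<lambda>(j, i). c2 j * c1 i) (\<lambda>(j, i). u1 i * u2 j) (\<lambda>x. T2 (T1 x))"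
    proof (rule conv_Aut_repI)
      show "finite (I2 \<times> I1)" using r1 r2 by (simp add: conv_Aut_rep_def)
      show "(\<Sum>ji\<in>I2 \<times> I1. case ji of (j, i) \<Rightarrow> c2 j * c1 i) = 1"
        using r1 r2 by (simp add: conv_Aut_rep_def sum.cartesian_product[symmetric] sum_distrib_left[symmetric])
    next
      fix ji assume "ji \<in> I2 \<times> I1"
      then show "0 \<le> (case ji of (j, i) \<Rightarrow> c2 j * c1 i)" "unitary m (case ji of (j, i) \<Rightarrow> u1 i * u2 j)"
        using r1 r2 by (auto simp: conv_Aut_rep_def intro: unitary_mult)
    next
      fix x :: "complex mat" assume x: "x \<in> carrier_mat m m"
      have "T1 x \<in> carrier_mat m m" using r1 x by (simp add: conv_Aut_rep_def)
      then have "T2 (T1 x) = mat_comb m I2 (\<lambda>j. complex_of_real (c2 j)) (\<lambda>j. adj (u2 j) * T1 x * u2 j)"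
        using r2 by (simp add: conv_Aut_rep_def)
      also have "\<dots> = mat_comb m I2 (\<lambda>j. complex_of_real (c2 j))
          (\<lambda>j. mat_comb m I1 (\<lambda>i. complex_of_real (c1 i)) (\<lambda>i. adj (u1 i * u2 j) * x * (u1 i * u2 j)))"
        using r2 by (intro mat_comb_cong conj_conv_Aut_rep[OF r1 x]) (simp add: conv_Aut_rep_def unitary_def)
      finally show "T2 (T1 x) = mat_comb m (I2 \<times> I1) (\<lambda>ji. complex_of_real (case ji of (j, i) \<Rightarrow> c2 j * c1 i))
          (\<lambda>ji. adj (case ji of (j, i) \<Rightarrow> u1 i * u2 j) * x * (case ji of (j, i) \<Rightarrow> u1 i * u2 j))"
        using r1 r2 by (simp add: conv_Aut_rep_def mat_comb_mat_comb case_prod_unfold)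
    qed
  qed
qed

lemma in_conv_Aut_convex:
  assumes J: "finite J" and w: "\<And>j. j \<in> J \<Longrightarrow> 0 \<le> w j" "sum w J = 1"
    and T: "\<And>j. j \<in> J \<Longrightarrow> in_conv_Aut m (T j)"
  shows "in_conv_Aut m (\<lambda>x. mat_comb m J (\<lambda>j. complex_of_real (w j)) (\<lambda>j. T j x))"
proof -
  have "\<forall>j\<in>J. \<exists>r :: nat set \<times> (nat \<Rightarrow> real) \<times> (nat \<Rightarrow> complex mat).
      conv_Aut_rep m (fst r) (fst (snd r)) (snd (snd r)) (T j)"
  proof
    fix j assume "j \<in> J"
    then obtain I :: "nat set" and c u where "conv_Aut_rep m I c u (T j)"
      using T in_conv_Aut_obtain by blast
    then show "\<exists>r :: nat set \<times> (nat \<Rightarrow> real) \<times> (nat \<Rightarrow> complex mat).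
        conv_Aut_rep m (fst r) (fst (snd r)) (snd (snd r)) (T j)"
      by (intro exI[of _ "(I, c, u)"]) simp
  qed
  from bchoice[OF this] obtain r :: "_ \<Rightarrow> nat set \<times> (nat \<Rightarrow> real) \<times> (nat \<Rightarrow> complex mat)"
    where r: "\<forall>j\<in>J. conv_Aut_rep m (fst (r j)) (fst (snd (r j))) (snd (snd (r j))) (T j)"
    by blast
  define I c u where "I j = fst (r j)" and "c j = fst (snd (r j))" and "u j = snd (snd (r j))" for j
  have rep: "\<And>j. j \<in> J \<Longrightarrow> conv_Aut_rep m (I j) (c j) (u j) (T j)"
    using r by (simp add: I_def c_def u_def)
  show ?thesis
  proof (rule in_conv_Aut_intro)
    show "conv_Aut_rep m (Sigma J I) (\<lambda>(j, i). w j * c j i) (\<lambda>(j, i). u j i)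
        (\<lambda>x. mat_comb m J (\<lambda>j. complex_of_real (w j)) (\<lambda>j. T j x))"
    proof (rule conv_Aut_repI)
      show "finite (Sigma J I)" using J rep by (simp add: conv_Aut_rep_def)
      show "(\<Sum>ji\<in>Sigma J I. case ji of (j, i) \<Rightarrow> w j * c j i) = 1"
        using J rep w by (simp add: conv_Aut_rep_def sum.Sigma[symmetric] sum_distrib_left[symmetric])
    next
      fix ji assume "ji \<in> Sigma J I"
      then show "0 \<le> (case ji of (j, i) \<Rightarrow> w j * c j i)" "unitary m (case ji of (j, i) \<Rightarrow> u j i)"
        using rep w by (auto simp: conv_Aut_rep_def)
    next
      fix x :: "complex mat" assume x: "x \<in> carrier_mat m m"
      have "mat_comb m J (\<lambda>j. complex_of_real (w j)) (\<lambda>j. T j x) = mat_comb m J (\<lambda>j. complex_of_real (w j))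
          (\<lambda>j. mat_comb m (I j) (\<lambda>i. complex_of_real (c j i)) (\<lambda>i. adj (u j i) * x * u j i))"
        using rep x by (auto simp: conv_Aut_rep_def intro!: mat_comb_cong)
      then show "mat_comb m J (\<lambda>j. complex_of_real (w j)) (\<lambda>j. T j x) =
          mat_comb m (Sigma J I) (\<lambda>ji. complex_of_real (case ji of (j, i) \<Rightarrow> w j * c j i))
          (\<lambda>ji. adj (case ji of (j, i) \<Rightarrow> u j i) * x * (case ji of (j, i) \<Rightarrow> u j i))"
        using J rep by (simp add: conv_Aut_rep_def mat_comb_mat_comb case_prod_unfold)
    qed
  qed
qed

lemma mat_comb_kron_kernel_map:
  "mat_comb (n * k) J a (\<lambda>j. kron n k (kernel_map n (\<kappa> j) Y) (1\<^sub>m k)) =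
   kron n k (kernel_map n (\<lambda>t t' r s. \<Sum>j\<in>J. a j * \<kappa> j t t' r s) Y) (1\<^sub>m k)"
proof (rule eq_block_matI)
  fix x y c d assume xy: "x < n" "y < n" "c < k" "d < k"
  have "mat_comb (n * k) J a (\<lambda>j. kron n k (kernel_map n (\<kappa> j) Y) (1\<^sub>m k)) $$ (x * k + c, y * k + d) =
      (\<Sum>j\<in>J. a j * ((\<Sum>t<n. \<Sum>t'<n. Y $$ (t, t') * \<kappa> j t t' x y) * 1\<^sub>m k $$ (c, d)))"
    using xy by (simp add: index_mat_comb block_index_less index_kron kernel_map_def)
  also have "\<dots> = (\<Sum>t<n. \<Sum>t'<n. Y $$ (t, t') * (\<Sum>j\<in>J. a j * \<kappa> j t t' x y)) * 1\<^sub>m k $$ (c, d)"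
    by (simp add: sum_distrib_left sum_distrib_right sum.swap[of _ J] mult.assoc mult.left_commute)
  also have "\<dots> = kron n k (kernel_map n (\<lambda>t t' r s. \<Sum>j\<in>J. a j * \<kappa> j t t' r s) Y) (1\<^sub>m k) $$
      (x * k + c, y * k + d)"
    using xy by (simp add: index_kron kernel_map_def)
  finally show "mat_comb (n * k) J a (\<lambda>j. kron n k (kernel_map n (\<kappa> j) Y) (1\<^sub>m k)) $$ (x * k + c, y * k + d) =
      kron n k (kernel_map n (\<lambda>t t' r s. \<Sum>j\<in>J. a j * \<kappa> j t t' r s) Y) (1\<^sub>m k) $$ (x * k + c, y * k + d)" .
qed simp_all

section \<open>Twirling a kernel\<close>

definition sign_flip :: "nat set \<Rightarrow> nat \<Rightarrow> complex" where
  "sign_flip S x = (if x \<in> S then -1 else 1)"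

definition paired_indices :: "nat \<Rightarrow> nat \<Rightarrow> nat \<Rightarrow> nat \<Rightarrow> bool" where
  "paired_indices t t' r s \<longleftrightarrow> (t = t' \<and> r = s) \<or> (t = r \<and> t' = s) \<or> (t = s \<and> t' = r)"

lemma sign_flip_toggle:
  "sign_flip (if i \<in> S then S - {i} else insert i S) x = (if x = i then - sign_flip S x else sign_flip S x)"
  unfolding sign_flip_def by (cases "i \<in> S") auto

lemma sum_sign_flip:
  assumes "t < n" "t' < n" "r < n" "s < n"
  shows "(\<Sum>S\<in>Pow {..<n}. sign_flip S t * sign_flip S t' * sign_flip S r * sign_flip S s) =
    (if paired_indices t t' r s then of_nat (card (Pow {..<n})) else 0)"
proof (cases "paired_indices t t' r s")
  case True
  then have "sign_flip S t * sign_flip S t' * sign_flip S r * sign_flip S s = 1" for S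
    unfolding paired_indices_def by (auto simp: sign_flip_def)
  then show ?thesis using True by simp
next
  case False
  let ?g = "\<lambda>S. sign_flip S t * sign_flip S t' * sign_flip S r * sign_flip S s"
  let ?toggle = "\<lambda>i S. if i \<in> S then S - {i} else insert i S"
  \<comment> \<open>some index occurs exactly once, and toggling its sign negates the summand\<close>
  have "(t \<noteq> t' \<and> t \<noteq> r \<and> t \<noteq> s) \<or> (t' \<noteq> t \<and> t' \<noteq> r \<and> t' \<noteq> s) \<or>
      (r \<noteq> t \<and> r \<noteq> t' \<and> r \<noteq> s) \<or> (s \<noteq> t \<and> s \<noteq> t' \<and> s \<noteq> r)"
    using False unfolding paired_indices_def by auto
  then obtain i where "i < n" and odd: "\<And>S. ?g (?toggle i S) = - ?g S"
  proof (elim disjE)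
    assume "t \<noteq> t' \<and> t \<noteq> r \<and> t \<noteq> s" then show ?thesis using assms that[of t] by (auto simp: sign_flip_toggle)
  next
    assume "t' \<noteq> t \<and> t' \<noteq> r \<and> t' \<noteq> s" then show ?thesis using assms that[of t'] by (auto simp: sign_flip_toggle)
  next
    assume "r \<noteq> t \<and> r \<noteq> t' \<and> r \<noteq> s" then show ?thesis using assms that[of r] by (auto simp: sign_flip_toggle)
  next
    assume "s \<noteq> t \<and> s \<noteq> t' \<and> s \<noteq> r" then show ?thesis using assms that[of s] by (auto simp: sign_flip_toggle)
  qed
  have "bij_betw (?toggle i) (Pow {..<n}) (Pow {..<n})"
    by (rule bij_betw_byWitness[where f' = "?toggle i"]) (use \<open>i < n\<close> in auto)
  then have "(\<Sum>S\<in>Pow {..<n}. ?g (?toggle i S)) = (\<Sum>S\<in>Pow {..<n}. ?g S)"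
    by (rule sum.reindex_bij_betw)
  then show ?thesis using False by (simp add: odd sum_negf)
qed

lemma permutes_lessThan_less: "\<sigma> permutes {..<n} \<Longrightarrow> x < n \<Longrightarrow> \<sigma> x < n"
  using permutes_in_image[of \<sigma> "{..<n}" x] by simp

lemma hw_kernel_eq_paired:
  assumes "2 \<le> n"
    and inv: "\<And>\<pi> a b c d. \<pi> permutes {..<n} \<Longrightarrow> \<kappa> (\<pi> a) (\<pi> b) (\<pi> c) (\<pi> d) = \<kappa> a b c d"
    and diag: "\<And>x. x < n \<Longrightarrow> \<kappa> x x x x = 0"
    and cross: "\<And>x y. x < n \<Longrightarrow> y < n \<Longrightarrow> x \<noteq> y \<Longrightarrow> \<kappa> x y x y = 0"
    and swap: "\<And>x y. x < n \<Longrightarrow> y < n \<Longrightarrow> x \<noteq> y \<Longrightarrow> \<kappa> y x x y = - \<kappa> y y x x"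
    and trace: "\<And>r. r < n \<Longrightarrow> (\<Sum>t<n. \<kappa> t t r r) = 1"
    and idx: "t < n" "t' < n" "r < n" "s < n" and paired: "paired_indices t t' r s"
  shows "\<kappa> t t' r s = hw_kernel n t t' r s"
proof -
  have offdiag: "\<kappa> x x y y = 1 / (of_nat n - 1)" if xy: "x < n" "y < n" "x \<noteq> y" for x y
  proof -
    have const: "\<kappa> z z y y = (if z = y then 0 else \<kappa> x x y y)" if "z < n" for z
    proof (cases "z = y")
      case False
      have "Transposition.transpose x z permutes {..<n}" using xy \<open>z < n\<close> by (intro permutes_swap_id) auto
      from inv[OF this, of z z y y] show ?thesis using False xy by (simp add: transpose_def)
    qed (simp add: diag xy)
    have "1 = (\<Sum>z<n. \<kappa> z z y y)" using trace xy by simp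
    also have "\<dots> = (\<Sum>z<n. \<kappa> x x y y - (if z = y then \<kappa> x x y y else 0))"
      by (rule sum.cong) (auto simp: const)
    also have "\<dots> = (of_nat n - 1) * \<kappa> x x y y" using xy by (simp add: sum_subtractf algebra_simps)
    finally have "(of_nat n - 1) * \<kappa> x x y y = 1" ..
    moreover have "(of_nat n - 1 :: complex) \<noteq> 0"
      using \<open>2 \<le> n\<close> by (metis of_nat_1 of_nat_eq_iff right_minus_eq Suc_1 not_less_eq_eq order_refl)
    ultimately show ?thesis by (simp add: field_simps)
  qed
  from paired consider "t = t'" "r = s" | "t = r" "t' = s" | "t = s" "t' = r"
    unfolding paired_indices_def by blast
  then show ?thesis
  proof cases
    case 1
    then show ?thesis using idx by (cases "t = r") (simp_all add: hw_kernel_def diag offdiag)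
  next
    case 2
    then show ?thesis using idx by (cases "t = t'") (simp_all add: hw_kernel_def diag cross)
  next
    case 3
    then show ?thesis using idx by (cases "r = s") (simp_all add: hw_kernel_def diag swap offdiag)
  qed
qed

definition perm_average ::
    "nat \<Rightarrow> (nat \<Rightarrow> nat \<Rightarrow> nat \<Rightarrow> nat \<Rightarrow> complex) \<Rightarrow> nat \<Rightarrow> nat \<Rightarrow> nat \<Rightarrow> nat \<Rightarrow> complex" where
  "perm_average n \<kappa> t t' r s =
     (\<Sum>\<sigma>\<in>{\<sigma>. \<sigma> permutes {..<n}}. \<kappa> (\<sigma> t) (\<sigma> t') (\<sigma> r) (\<sigma> s)) / of_nat (card {\<sigma>. \<sigma> permutes {..<n}})"

lemma perm_average_permute:
  assumes perm: "\<pi> permutes {..<n}"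
  shows "perm_average n \<kappa> (\<pi> a) (\<pi> b) (\<pi> c) (\<pi> d) = perm_average n \<kappa> a b c d"
proof -
  let ?P = "{\<sigma>. \<sigma> permutes {..<n}}"
  have "bij_betw (\<lambda>\<sigma>. \<sigma> \<circ> \<pi>) ?P ?P"
  proof (rule bij_betw_byWitness[where f' = "\<lambda>\<sigma>. \<sigma> \<circ> inv_into UNIV \<pi>"])
    show "\<forall>\<sigma>\<in>?P. \<sigma> \<circ> \<pi> \<circ> inv_into UNIV \<pi> = \<sigma>" "\<forall>\<sigma>\<in>?P. \<sigma> \<circ> inv_into UNIV \<pi> \<circ> \<pi> = \<sigma>"
      using permutes_inv_o[OF perm] by (simp_all add: comp_assoc)
    show "(\<lambda>\<sigma>. \<sigma> \<circ> \<pi>) ` ?P \<subseteq> ?P" "(\<lambda>\<sigma>. \<sigma> \<circ> inv_into UNIV \<pi>) ` ?P \<subseteq> ?P"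
      using perm by (auto intro: permutes_compose permutes_inv)
  qed
  from sum.reindex_bij_betw[OF this, of "\<lambda>\<sigma>. \<kappa> (\<sigma> a) (\<sigma> b) (\<sigma> c) (\<sigma> d)"] show ?thesis
    by (simp add: perm_average_def)
qed

lemma perm_average_eq_hw_kernel:
  assumes "2 \<le> n"
    and diag: "\<And>x. x < n \<Longrightarrow> \<kappa> x x x x = 0"
    and cross: "\<And>x y. x < n \<Longrightarrow> y < n \<Longrightarrow> x \<noteq> y \<Longrightarrow> \<kappa> x y x y = 0"
    and swap: "\<And>x y. x < n \<Longrightarrow> y < n \<Longrightarrow> x \<noteq> y \<Longrightarrow> \<kappa> y x x y = - \<kappa> y y x x"
    and trace: "\<And>r. r < n \<Longrightarrow> (\<Sum>t<n. \<kappa> t t r r) = 1"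
    and "t < n" "t' < n" "r < n" "s < n" "paired_indices t t' r s"
  shows "perm_average n \<kappa> t t' r s = hw_kernel n t t' r s"
proof (rule hw_kernel_eq_paired[OF \<open>2 \<le> n\<close> perm_average_permute])
  let ?P = "{\<sigma>. \<sigma> permutes {..<n}}"
  have inj: "\<sigma> x \<noteq> \<sigma> y" if "\<sigma> \<in> ?P" "x \<noteq> y" for \<sigma> x y
    using that permutes_inj[of \<sigma> "{..<n}"] by (auto dest: injD)
  have less: "\<sigma> x < n" if "\<sigma> \<in> ?P" "x < n" for \<sigma> x
    using that permutes_lessThan_less by blast
  show "perm_average n \<kappa> x x x x = 0" if "x < n" for x
    using that by (simp add: perm_average_def diag less)
  show "perm_average n \<kappa> x y x y = 0" if "x < n" "y < n" "x \<noteq> y" for x y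
    using that by (simp add: perm_average_def cross less inj)
  show "perm_average n \<kappa> y x x y = - perm_average n \<kappa> y y x x" if "x < n" "y < n" "x \<noteq> y" for x y
    using that by (simp add: perm_average_def swap less inj sum_negf)
  show "(\<Sum>t<n. perm_average n \<kappa> t t r r) = 1" if "r < n" for r
  proof -
    have one: "(\<Sum>t<n. \<kappa> (\<sigma> t) (\<sigma> t) (\<sigma> r) (\<sigma> r)) = 1" if "\<sigma> \<in> ?P" for \<sigma>
      using sum.reindex_bij_betw[OF permutes_imp_bij, of \<sigma> "{..<n}" "\<lambda>t. \<kappa> t t (\<sigma> r) (\<sigma> r)"]
        trace less \<open>r < n\<close> that by simp
    have "card ?P \<noteq> 0" by (simp add: card_permutations)
    have "(\<Sum>t<n. perm_average n \<kappa> t t r r) =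
        (\<Sum>t<n. \<Sum>\<sigma>\<in>?P. \<kappa> (\<sigma> t) (\<sigma> t) (\<sigma> r) (\<sigma> r)) / of_nat (card ?P)"
      by (simp add: perm_average_def sum_divide_distrib)
    also have "\<dots> = (\<Sum>\<sigma>\<in>?P. \<Sum>t<n. \<kappa> (\<sigma> t) (\<sigma> t) (\<sigma> r) (\<sigma> r)) / of_nat (card ?P)"
      by (subst sum.swap) (rule refl)
    also have "\<dots> = 1" using one \<open>card ?P \<noteq> 0\<close> by simp
    finally show ?thesis .
  qed
qed (use assms in auto)

definition twirl ::
    "nat \<Rightarrow> (nat \<Rightarrow> nat \<Rightarrow> nat \<Rightarrow> nat \<Rightarrow> complex) \<Rightarrow> nat \<Rightarrow> nat \<Rightarrow> nat \<Rightarrow> nat \<Rightarrow> complex" where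
  "twirl n \<kappa> t t' r s =
     (\<Sum>(\<sigma>, S)\<in>{\<sigma>. \<sigma> permutes {..<n}} \<times> Pow {..<n}.
        sign_flip S t * sign_flip S t' * sign_flip S r * sign_flip S s * \<kappa> (\<sigma> t) (\<sigma> t') (\<sigma> r) (\<sigma> s))
     / of_nat (card ({\<sigma>. \<sigma> permutes {..<n}} \<times> Pow {..<n}))"

lemma twirl_eq_hw_kernel:
  assumes "2 \<le> n"
    and "\<And>x. x < n \<Longrightarrow> \<kappa> x x x x = 0"
    and "\<And>x y. x < n \<Longrightarrow> y < n \<Longrightarrow> x \<noteq> y \<Longrightarrow> \<kappa> x y x y = 0"
    and "\<And>x y. x < n \<Longrightarrow> y < n \<Longrightarrow> x \<noteq> y \<Longrightarrow> \<kappa> y x x y = - \<kappa> y y x x"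
    and "\<And>r. r < n \<Longrightarrow> (\<Sum>t<n. \<kappa> t t r r) = 1"
    and idx: "t < n" "t' < n" "r < n" "s < n"
  shows "twirl n \<kappa> t t' r s = hw_kernel n t t' r s"
proof -
  let ?P = "{\<sigma>. \<sigma> permutes {..<n}}" and ?sgn = "\<lambda>S. sign_flip S t * sign_flip S t' * sign_flip S r * sign_flip S s"
  have "(\<Sum>(\<sigma>, S)\<in>?P \<times> Pow {..<n}. ?sgn S * \<kappa> (\<sigma> t) (\<sigma> t') (\<sigma> r) (\<sigma> s)) =
      (\<Sum>\<sigma>\<in>?P. \<kappa> (\<sigma> t) (\<sigma> t') (\<sigma> r) (\<sigma> s)) * (\<Sum>S\<in>Pow {..<n}. ?sgn S)"
    unfolding sum_product sum.cartesian_product by (rule sum.cong) (auto simp: mult.commute)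
  then have "twirl n \<kappa> t t' r s =
      perm_average n \<kappa> t t' r s * ((\<Sum>S\<in>Pow {..<n}. ?sgn S) / of_nat (card (Pow {..<n})))"
    by (simp add: twirl_def perm_average_def card_cartesian_product times_divide_times_eq)
  also have "\<dots> = (if paired_indices t t' r s then perm_average n \<kappa> t t' r s else 0)"
    using idx by (simp add: sum_sign_flip card_Pow)
  also have "\<dots> = hw_kernel n t t' r s"
    using perm_average_eq_hw_kernel[OF assms] by (auto simp: hw_kernel_def paired_indices_def)
  finally show ?thesis .
qed

lemma sign_flip_sq: "sign_flip S x * sign_flip S x = 1"
  by (simp add: sign_flip_def)

lemma cnj_sign_flip: "cnj (sign_flip S x) = sign_flip S x"
  by (simp add: sign_flip_def)

definition signed_perm_conj :: "nat \<Rightarrow> nat \<Rightarrow> (nat \<Rightarrow> nat) \<Rightarrow> nat set \<Rightarrow> complex mat \<Rightarrow> complex mat" where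
  "signed_perm_conj n k \<sigma> S V = mat (n * k) (n * k) (\<lambda>(p, q).
     sign_flip S (p div k) * sign_flip S (q div k) * V $$ (\<sigma> (p div k) * k + p mod k, \<sigma> (q div k) * k + q mod k))"

lemma signed_perm_conj_carrier_mat[simp]: "signed_perm_conj n k \<sigma> S V \<in> carrier_mat (n * k) (n * k)"
  by (simp add: signed_perm_conj_def)

lemma index_signed_perm_conj:
  "x < n \<Longrightarrow> y < n \<Longrightarrow> c < k \<Longrightarrow> d < k \<Longrightarrow> signed_perm_conj n k \<sigma> S V $$ (x * k + c, y * k + d) =
     sign_flip S x * sign_flip S y * V $$ (\<sigma> x * k + c, \<sigma> y * k + d)"
  by (simp add: signed_perm_conj_def block_index_less)

lemma conj_kernel_signed_perm_conj:
  assumes "t < n" "t' < n" "r < n" "s < n"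
  shows "conj_kernel k (signed_perm_conj n k \<sigma> S V) t t' r s = sign_flip S t * sign_flip S t' *
    sign_flip S r * sign_flip S s * conj_kernel k V (\<sigma> t) (\<sigma> t') (\<sigma> r) (\<sigma> s)"
proof -
  let ?sgn = "sign_flip S t * sign_flip S t' * sign_flip S r * sign_flip S s"
  have "conj_kernel k (signed_perm_conj n k \<sigma> S V) t t' r s = (\<Sum>d<k. \<Sum>c<k. ?sgn *
      (cnj (V $$ (\<sigma> t * k + c, \<sigma> r * k + d)) * V $$ (\<sigma> t' * k + c, \<sigma> s * k + d))) / of_nat k"
    unfolding conj_kernel_def using assms
    by (intro arg_cong[where f = "\<lambda>z. z / of_nat k"] sum.cong refl)
      (simp add: index_signed_perm_conj cnj_sign_flip mult.assoc mult.left_commute)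
  then show ?thesis by (simp add: conj_kernel_def sum_distrib_left)
qed

lemma unitary_signed_perm_conj:
  assumes V: "unitary (n * k) V" and \<sigma>: "\<sigma> permutes {..<n}"
  shows "unitary (n * k) (signed_perm_conj n k \<sigma> S V)"
proof (rule unitaryI_left[OF signed_perm_conj_carrier_mat], rule eq_block_matI)
  let ?W = "signed_perm_conj n k \<sigma> S V"
  have Vc: "V \<in> carrier_mat (n * k) (n * k)" and VV: "adj V * V = 1\<^sub>m (n * k)"
    using V by (auto simp: unitary_def)
  fix y z d e assume yz: "y < n" "z < n" "d < k" "e < k"
  have \<sigma>yz: "\<sigma> y < n" "\<sigma> z < n" using yz \<sigma> permutes_lessThan_less by auto
  have "(adj ?W * ?W) $$ (y * k + d, z * k + e) =
      (\<Sum>t<n. \<Sum>c<k. cnj (?W $$ (t * k + c, y * k + d)) * ?W $$ (t * k + c, z * k + e))"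
    using yz by (simp del: index_mult_mat(1) add: index_adj_mult_block block_index_less)
  also have "\<dots> = sign_flip S y * sign_flip S z * (\<Sum>t<n. (\<lambda>t. \<Sum>c<k.
      cnj (V $$ (t * k + c, \<sigma> y * k + d)) * V $$ (t * k + c, \<sigma> z * k + e)) (\<sigma> t))"
  proof -
    have "cnj (?W $$ (t * k + c, y * k + d)) * ?W $$ (t * k + c, z * k + e) =
        (sign_flip S t * sign_flip S t) * (sign_flip S y * sign_flip S z) *
        (cnj (V $$ (\<sigma> t * k + c, \<sigma> y * k + d)) * V $$ (\<sigma> t * k + c, \<sigma> z * k + e))"
      if "t < n" "c < k" for t c
      using yz that by (simp add: index_signed_perm_conj cnj_sign_flip mult.assoc mult.left_commute)
    then show ?thesis by (simp add: sign_flip_sq sum_distrib_left)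
  qed
  also have "\<dots> = sign_flip S y * sign_flip S z *
      (\<Sum>t<n. \<Sum>c<k. cnj (V $$ (t * k + c, \<sigma> y * k + d)) * V $$ (t * k + c, \<sigma> z * k + e))"
    using sum.reindex_bij_betw[OF permutes_imp_bij[OF \<sigma>], of "\<lambda>t. \<Sum>c<k.
        cnj (V $$ (t * k + c, \<sigma> y * k + d)) * V $$ (t * k + c, \<sigma> z * k + e)"] by simp
  also have "\<dots> = sign_flip S y * sign_flip S z * (adj V * V) $$ (\<sigma> y * k + d, \<sigma> z * k + e)"
    using yz \<sigma>yz by (simp del: index_mult_mat(1) add: index_adj_mult_block[OF Vc Vc] block_index_less)
  also have "\<dots> = 1\<^sub>m (n * k) $$ (y * k + d, z * k + e)"
    using yz \<sigma>yz permutes_inj[OF \<sigma>] by (auto simp: VV block_index_less block_index_eq_iff sign_flip_sq dest: injD)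
  finally show "(adj ?W * ?W) $$ (y * k + d, z * k + e) = 1\<^sub>m (n * k) $$ (y * k + d, z * k + e)" .
qed (simp_all add: mult_carrier_mat[OF adj_carrier_mat[OF signed_perm_conj_carrier_mat] signed_perm_conj_carrier_mat])

lemma twirl_eq_average_conj_kernel:
  assumes "t < n" "t' < n" "r < n" "s < n"
  shows "twirl n (conj_kernel k V) t t' r s =
    (\<Sum>j\<in>{\<sigma>. \<sigma> permutes {..<n}} \<times> Pow {..<n}.
       complex_of_real (1 / real (card ({\<sigma>. \<sigma> permutes {..<n}} \<times> Pow {..<n}))) *
       conj_kernel k (signed_perm_conj n k (fst j) (snd j) V) t t' r s)"
  using assms by (simp add: twirl_def conj_kernel_signed_perm_conj sum_divide_distrib case_prod_unfold
      flip: sum_distrib_left)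

section \<open>The case \<open>n = 5\<close>\<close>

type_synonym zwi = "int \<times> int \<times> int \<times> int"

definition omega :: complex where
  "omega = Complex (-1/2) (sqrt 3 / 2)"

text \<open>Exact arithmetic in \<open>\<int>[\<omega>, i]\<close> with \<open>\<omega>\<close> a primitive cube root of unity: the quadruple
  \<open>(a, b, c, d)\<close> stands for \<open>a + b\<omega> + i (c + d\<omega>)\<close>, so that identities between such numbers
  can be checked by evaluation.\<close>

fun zwi_val :: "zwi \<Rightarrow> complex" where
  "zwi_val (a, b, c, d) = of_int a + of_int b * omega + \<i> * (of_int c + of_int d * omega)"

fun zwi_add :: "zwi \<Rightarrow> zwi \<Rightarrow> zwi" where
  "zwi_add (a, b, c, d) (a', b', c', d') = (a + a', b + b', c + c', d + d')"

fun zwi_mult :: "zwi \<Rightarrow> zwi \<Rightarrow> zwi" where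
  "zwi_mult (a, b, c, d) (a', b', c', d') =
     (a * a' - b * b' - c * c' + d * d',
      a * b' + b * a' - b * b' - c * d' - d * c' + d * d',
      a * c' - b * d' + c * a' - d * b',
      a * d' + b * c' - b * d' + c * b' + d * a' - d * b')"

fun zwi_cnj :: "zwi \<Rightarrow> zwi" where
  "zwi_cnj (a, b, c, d) = (a - b, - b, d - c, d)"

fun zwi_sum :: "(nat \<Rightarrow> zwi) \<Rightarrow> nat \<Rightarrow> zwi" where
  "zwi_sum f n = (if n = 0 then (0, 0, 0, 0) else zwi_add (zwi_sum f (n - 1)) (f (n - 1)))"

declare zwi_sum.simps[simp del]

lemma omega_sq: "omega * omega = -1 - omega"
  by (simp add: omega_def complex_eq_iff)

lemma cnj_omega: "cnj omega = -1 - omega"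
  by (simp add: omega_def complex_eq_iff)

lemma zwi_val_add: "zwi_val (zwi_add x y) = zwi_val x + zwi_val y"
  by (cases x; cases y) (simp add: algebra_simps)

lemma zwi_val_mult: "zwi_val (zwi_mult x y) = zwi_val x * zwi_val y"
proof -
  have ring_identity: "(A * A' - B * B' - C * C' + D * D') + (A * B' + B * A' - B * B' - C * D' - D * C' + D * D') * w
      + j * ((A * C' - B * D' + C * A' - D * B') + (A * D' + B * C' - B * D' + C * B' + D * A' - D * B') * w)
    = (A + B * w + j * (C + D * w)) * (A' + B' * w + j * (C' + D' * w))"
    if "w * w = -1 - w" "j * j = -1" for w j A B C D A' B' C' D' :: complex
    using that by Groebner_Basis.algebra
  obtain a b c d a' b' c' d' where "x = (a, b, c, d)" "y = (a', b', c', d')"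
    by (cases x; cases y) auto
  then show ?thesis
    by (simp only: zwi_mult.simps zwi_val.simps of_int_add of_int_diff of_int_mult)
      (rule ring_identity[OF omega_sq], simp)
qed

lemma zwi_val_cnj: "zwi_val (zwi_cnj x) = cnj (zwi_val x)"
proof -
  have ring_identity: "(A - B) + (- B) * w + j * ((D - C) + D * w) = A + B * cw + (- j) * (C + D * cw)"
    if "cw = -1 - w" for w j A B C D cw :: complex
    using that by Groebner_Basis.algebra
  obtain a b c d where "x = (a, b, c, d)"
    by (cases x) auto
  then show ?thesis
    by (simp only: zwi_cnj.simps zwi_val.simps of_int_add of_int_diff of_int_minus complex_cnj_add
        complex_cnj_mult complex_cnj_of_int complex_cnj_i) (rule ring_identity[OF cnj_omega])
qed

lemma zwi_val_sum: "zwi_val (zwi_sum f n) = (\<Sum>k<n. zwi_val (f k))"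
  by (induction n) (simp_all add: zwi_sum.simps zwi_val_add)

lemma zwi_val_of_int: "zwi_val (z, 0, 0, 0) = of_int z"
  by (simp only: zwi_val.simps) simp

definition U5_table :: "zwi list list" where
  "U5_table = [[(0,0,0,0),(0,0,0,0),(0,0,0,0),(0,0,0,0),(0,0,1,0),(0,0,0,0),(0,0,0,0),(0,0,0,0),(0,0,0,0),(0,0,0,0),(0,0,0,0),(0,-1,0,0),(0,0,0,0),(0,0,0,0),(0,0,0,0),(0,0,0,1),(0,0,0,0),(0,0,0,0),(-1,0,0,0),(0,0,0,0)],
 [(0,0,0,0),(0,0,0,0),(0,0,0,0),(0,0,0,0),(0,0,0,0),(0,0,1,0),(0,0,0,0),(0,0,0,0),(0,0,0,0),(0,0,0,0),(0,-1,0,0),(0,0,0,0),(0,0,0,0),(0,0,0,0),(0,0,0,-1),(0,0,0,0),(0,0,0,0),(0,0,0,0),(0,0,0,0),(1,0,0,0)],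
 [(0,0,0,0),(0,0,0,0),(0,0,0,0),(0,0,0,0),(0,0,0,0),(0,0,0,0),(0,0,-1,0),(0,0,0,0),(0,0,0,0),(0,1,0,0),(0,0,0,0),(0,0,0,0),(0,0,0,0),(0,0,0,-1),(0,0,0,0),(0,0,0,0),(1,0,0,0),(0,0,0,0),(0,0,0,0),(0,0,0,0)],
 [(0,0,0,0),(0,0,0,0),(0,0,0,0),(0,0,0,0),(0,0,0,0),(0,0,0,0),(0,0,0,0),(0,0,-1,0),(0,1,0,0),(0,0,0,0),(0,0,0,0),(0,0,0,0),(0,0,0,1),(0,0,0,0),(0,0,0,0),(0,0,0,0),(0,0,0,0),(-1,0,0,0),(0,0,0,0),(0,0,0,0)],
 [(0,0,-1,0),(0,0,0,0),(0,0,0,0),(0,0,0,0),(0,0,0,0),(0,0,0,0),(0,0,0,0),(0,0,0,0),(0,0,0,0),(0,0,0,0),(0,0,0,0),(0,0,1,0),(0,0,0,0),(0,0,0,0),(0,0,0,0),(0,1,0,0),(0,0,0,0),(0,0,0,0),(0,0,0,1),(0,0,0,0)],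
 [(0,0,0,0),(0,0,-1,0),(0,0,0,0),(0,0,0,0),(0,0,0,0),(0,0,0,0),(0,0,0,0),(0,0,0,0),(0,0,0,0),(0,0,0,0),(0,0,1,0),(0,0,0,0),(0,0,0,0),(0,0,0,0),(0,-1,0,0),(0,0,0,0),(0,0,0,0),(0,0,0,0),(0,0,0,0),(0,0,0,-1)],
 [(0,0,0,0),(0,0,0,0),(0,0,1,0),(0,0,0,0),(0,0,0,0),(0,0,0,0),(0,0,0,0),(0,0,0,0),(0,0,0,0),(0,0,1,0),(0,0,0,0),(0,0,0,0),(0,0,0,0),(0,1,0,0),(0,0,0,0),(0,0,0,0),(0,0,0,1),(0,0,0,0),(0,0,0,0),(0,0,0,0)],
 [(0,0,0,0),(0,0,0,0),(0,0,0,0),(0,0,1,0),(0,0,0,0),(0,0,0,0),(0,0,0,0),(0,0,0,0),(0,0,1,0),(0,0,0,0),(0,0,0,0),(0,0,0,0),(0,-1,0,0),(0,0,0,0),(0,0,0,0),(0,0,0,0),(0,0,0,0),(0,0,0,-1),(0,0,0,0),(0,0,0,0)],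
 [(0,0,0,0),(0,0,0,0),(0,0,0,0),(0,1,0,0),(0,0,0,0),(0,0,0,0),(0,0,0,0),(0,0,-1,0),(0,0,0,0),(0,0,0,0),(0,0,0,0),(0,0,0,0),(0,0,1,0),(0,0,0,0),(0,0,0,0),(0,0,0,0),(0,0,0,0),(0,-1,0,0),(0,0,0,0),(0,0,0,0)],
 [(0,0,0,0),(0,0,0,0),(0,1,0,0),(0,0,0,0),(0,0,0,0),(0,0,0,0),(0,0,-1,0),(0,0,0,0),(0,0,0,0),(0,0,0,0),(0,0,0,0),(0,0,0,0),(0,0,0,0),(0,0,-1,0),(0,0,0,0),(0,0,0,0),(0,1,0,0),(0,0,0,0),(0,0,0,0),(0,0,0,0)],
 [(0,0,0,0),(0,-1,0,0),(0,0,0,0),(0,0,0,0),(0,0,0,0),(0,0,-1,0),(0,0,0,0),(0,0,0,0),(0,0,0,0),(0,0,0,0),(0,0,0,0),(0,0,0,0),(0,0,0,0),(0,0,0,0),(0,0,1,0),(0,0,0,0),(0,0,0,0),(0,0,0,0),(0,0,0,0),(0,-1,0,0)],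
 [(0,-1,0,0),(0,0,0,0),(0,0,0,0),(0,0,0,0),(0,0,-1,0),(0,0,0,0),(0,0,0,0),(0,0,0,0),(0,0,0,0),(0,0,0,0),(0,0,0,0),(0,0,0,0),(0,0,0,0),(0,0,0,0),(0,0,0,0),(0,0,-1,0),(0,0,0,0),(0,0,0,0),(0,1,0,0),(0,0,0,0)],
 [(0,0,0,0),(0,0,0,0),(0,0,0,0),(0,0,0,-1),(0,0,0,0),(0,0,0,0),(0,0,0,0),(0,-1,0,0),(0,0,-1,0),(0,0,0,0),(0,0,0,0),(0,0,0,0),(0,0,0,0),(0,0,0,0),(0,0,0,0),(0,0,0,0),(0,0,0,0),(0,0,1,0),(0,0,0,0),(0,0,0,0)],
 [(0,0,0,0),(0,0,0,0),(0,0,0,1),(0,0,0,0),(0,0,0,0),(0,0,0,0),(0,1,0,0),(0,0,0,0),(0,0,0,0),(0,0,1,0),(0,0,0,0),(0,0,0,0),(0,0,0,0),(0,0,0,0),(0,0,0,0),(0,0,0,0),(0,0,1,0),(0,0,0,0),(0,0,0,0),(0,0,0,0)],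
 [(0,0,0,0),(0,0,0,1),(0,0,0,0),(0,0,0,0),(0,0,0,0),(0,-1,0,0),(0,0,0,0),(0,0,0,0),(0,0,0,0),(0,0,0,0),(0,0,-1,0),(0,0,0,0),(0,0,0,0),(0,0,0,0),(0,0,0,0),(0,0,0,0),(0,0,0,0),(0,0,0,0),(0,0,0,0),(0,0,1,0)],
 [(0,0,0,-1),(0,0,0,0),(0,0,0,0),(0,0,0,0),(0,1,0,0),(0,0,0,0),(0,0,0,0),(0,0,0,0),(0,0,0,0),(0,0,0,0),(0,0,0,0),(0,0,1,0),(0,0,0,0),(0,0,0,0),(0,0,0,0),(0,0,0,0),(0,0,0,0),(0,0,0,0),(0,0,1,0),(0,0,0,0)],
 [(0,0,0,0),(0,0,0,0),(1,0,0,0),(0,0,0,0),(0,0,0,0),(0,0,0,0),(0,0,0,-1),(0,0,0,0),(0,0,0,0),(0,1,0,0),(0,0,0,0),(0,0,0,0),(0,0,0,0),(0,0,-1,0),(0,0,0,0),(0,0,0,0),(0,0,0,0),(0,0,0,0),(0,0,0,0),(0,0,0,0)],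
 [(0,0,0,0),(0,0,0,0),(0,0,0,0),(-1,0,0,0),(0,0,0,0),(0,0,0,0),(0,0,0,0),(0,0,0,1),(0,-1,0,0),(0,0,0,0),(0,0,0,0),(0,0,0,0),(0,0,-1,0),(0,0,0,0),(0,0,0,0),(0,0,0,0),(0,0,0,0),(0,0,0,0),(0,0,0,0),(0,0,0,0)],
 [(-1,0,0,0),(0,0,0,0),(0,0,0,0),(0,0,0,0),(0,0,0,-1),(0,0,0,0),(0,0,0,0),(0,0,0,0),(0,0,0,0),(0,0,0,0),(0,0,0,0),(0,1,0,0),(0,0,0,0),(0,0,0,0),(0,0,0,0),(0,0,-1,0),(0,0,0,0),(0,0,0,0),(0,0,0,0),(0,0,0,0)],
 [(0,0,0,0),(1,0,0,0),(0,0,0,0),(0,0,0,0),(0,0,0,0),(0,0,0,1),(0,0,0,0),(0,0,0,0),(0,0,0,0),(0,0,0,0),(0,-1,0,0),(0,0,0,0),(0,0,0,0),(0,0,0,0),(0,0,-1,0),(0,0,0,0),(0,0,0,0),(0,0,0,0),(0,0,0,0),(0,0,0,0)]]"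

definition U5 :: "complex mat" where
  "U5 = mat 20 20 (\<lambda>(p, q). zwi_val (U5_table ! p ! q) / 2)"

definition U5_orthonormal :: bool where
  "U5_orthonormal \<longleftrightarrow> (\<forall>p\<in>set [0..<20]. \<forall>q\<in>set [0..<20].
     zwi_sum (\<lambda>l. zwi_mult (zwi_cnj (U5_table ! l ! p)) (U5_table ! l ! q)) 20 =
       (if p = q then (4, 0, 0, 0) else (0, 0, 0, 0)))"

definition U5_kernel :: bool where
  "U5_kernel \<longleftrightarrow> (\<forall>t\<in>set [0..<5]. \<forall>t'\<in>set [0..<5]. \<forall>r\<in>set [0..<5]. \<forall>s\<in>set [0..<5].
     zwi_sum (\<lambda>d. zwi_sum (\<lambda>c.
       zwi_mult (zwi_cnj (U5_table ! (t * 4 + c) ! (r * 4 + d))) (U5_table ! (t' * 4 + c) ! (s * 4 + d))) 4) 4 =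
     (4 * ((if t = t' \<and> r = s then 1 else 0) - (if t = s \<and> t' = r then 1 else 0)), 0, 0, 0))"

lemma U5_orthonormal: U5_orthonormal
  by code_simp

lemma U5_kernel: U5_kernel
  by code_simp

lemma U5_carrier_mat: "U5 \<in> carrier_mat 20 20"
  by (simp add: U5_def)

lemma U5_orthonormal_entry:
  "p < 20 \<Longrightarrow> q < 20 \<Longrightarrow> zwi_sum (\<lambda>l. zwi_mult (zwi_cnj (U5_table ! l ! p)) (U5_table ! l ! q)) 20 =
     (if p = q then (4, 0, 0, 0) else (0, 0, 0, 0))"
  using U5_orthonormal by (simp add: U5_orthonormal_def)

lemma U5_kernel_entry:
  "t < 5 \<Longrightarrow> t' < 5 \<Longrightarrow> r < 5 \<Longrightarrow> s < 5 \<Longrightarrow>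
   zwi_sum (\<lambda>d. zwi_sum (\<lambda>c. zwi_mult (zwi_cnj (U5_table ! (t * 4 + c) ! (r * 4 + d)))
     (U5_table ! (t' * 4 + c) ! (s * 4 + d))) 4) 4 =
   (4 * ((if t = t' \<and> r = s then 1 else 0) - (if t = s \<and> t' = r then 1 else 0)), 0, 0, 0)"
  using U5_kernel by (simp add: U5_kernel_def)

lemma U5_unitary: "unitary 20 U5"
proof (rule unitaryI_left[OF U5_carrier_mat], rule eq_matI)
  fix p q assume "p < dim_row (1\<^sub>m 20 :: complex mat)" "q < dim_col (1\<^sub>m 20 :: complex mat)"
  then have pq: "p < 20" "q < 20" by auto
  have "(adj U5 * U5) $$ (p, q) = (\<Sum>l<20. zwi_val (zwi_mult (zwi_cnj (U5_table ! l ! p)) (U5_table ! l ! q))) / 4"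
    using pq U5_carrier_mat by (simp del: index_mult_mat(1) add: index_mult_mat_sum[of _ 20 20 _ 20]
        U5_def zwi_val_mult zwi_val_cnj sum_divide_distrib)
  also have "\<dots> = 1\<^sub>m 20 $$ (p, q)"
    using pq by (simp add: U5_orthonormal_entry flip: zwi_val_sum)
  finally show "(adj U5 * U5) $$ (p, q) = 1\<^sub>m 20 $$ (p, q)" .
qed (simp_all add: U5_def)

lemma conj_kernel_U5:
  assumes "t < 5" "t' < 5" "r < 5" "s < 5"
  shows "conj_kernel 4 U5 t t' r s = hw_kernel 5 t t' r s"
proof -
  have "x * 4 + c < 20" if "x < 5" "c < 4" for x c :: nat
    using block_index_less[OF that] by simp
  then have "conj_kernel 4 U5 t t' r s = zwi_val (zwi_sum (\<lambda>d. zwi_sum (\<lambda>c. zwi_mult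
      (zwi_cnj (U5_table ! (t * 4 + c) ! (r * 4 + d))) (U5_table ! (t' * 4 + c) ! (s * 4 + d))) 4) 4) / 16"
    using assms by (simp add: conj_kernel_def U5_def zwi_val_sum zwi_val_mult zwi_val_cnj sum_divide_distrib)
  also have "\<dots> = hw_kernel 5 t t' r s"
  proof -
    have "(of_int (4 * ((if P then 1 else 0) - (if Q then 1 else 0))) :: complex) / 16 =
        ((if P then 1 else 0) - (if Q then 1 else 0)) / (of_nat 5 - 1)" for P Q
      by (cases P; cases Q) simp_all
    then show ?thesis unfolding U5_kernel_entry[OF assms] zwi_val_of_int hw_kernel_def .
  qed
  finally show ?thesis .
qed

lemma holevo_werner_5_factorization:
  "\<exists>u. unitary (5 * 4) u \<and>
     (\<forall>x\<in>carrier_mat 5 5. holevo_werner 5 x = id_tensor_ntr 5 4 (adj u * kron 5 4 x (1\<^sub>m 4) * u))"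
proof (intro exI conjI ballI)
  show "unitary (5 * 4) U5" using U5_unitary by simp
  fix x :: "complex mat" assume x: "x \<in> carrier_mat 5 5"
  have U: "U5 \<in> carrier_mat (5 * 4) (5 * 4)" using U5_carrier_mat by simp
  show "holevo_werner 5 x = id_tensor_ntr 5 4 (adj U5 * kron 5 4 x (1\<^sub>m 4) * U5)"
    unfolding id_tensor_ntr_conj_kron[OF U x] holevo_werner_eq_kernel_map[OF x]
    by (intro kernel_map_cong) (simp add: conj_kernel_U5)
qed

section \<open>Odd \<open>n \<ge> 5\<close>\<close>

definition pair_partner :: "nat \<Rightarrow> nat" where
  "pair_partner x = (if odd x then x + 1 else x - 1)"

definition pair_sign :: "nat \<Rightarrow> complex" where
  "pair_sign x = (if odd x then 1 else -1)"

lemma pair_partner_less: "odd n \<Longrightarrow> 5 \<le> y \<Longrightarrow> y < n \<Longrightarrow> pair_partner y < n"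
  unfolding pair_partner_def by (cases "odd y") (auto elim: oddE, presburger)

lemma pair_partner_ge: "5 \<le> y \<Longrightarrow> 5 \<le> pair_partner y"
  unfolding pair_partner_def by (cases "odd y") (auto, presburger)

lemma pair_partner_neq_small: "5 \<le> x \<Longrightarrow> y < 5 \<Longrightarrow> y = pair_partner x \<longleftrightarrow> False"
  using pair_partner_ge by fastforce

lemma pair_partner_partner: "5 \<le> y \<Longrightarrow> pair_partner (pair_partner y) = y"
  unfolding pair_partner_def by (cases "odd y") auto

lemma pair_partner_neq: "5 \<le> y \<Longrightarrow> pair_partner y \<noteq> y"
  unfolding pair_partner_def by (cases "odd y") auto

lemma pair_sign_partner: "5 \<le> y \<Longrightarrow> pair_sign (pair_partner y) = - pair_sign y"
  unfolding pair_partner_def pair_sign_def by (cases "odd y") auto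

lemma pair_partner_eq_iff: "5 \<le> x \<Longrightarrow> 5 \<le> y \<Longrightarrow> y = pair_partner x \<longleftrightarrow> x = pair_partner y"
  using pair_partner_partner by metis

lemma cnj_pair_sign_sq: "cnj (pair_sign x) * pair_sign x = 1"
  by (simp add: pair_sign_def)

definition U_odd :: "nat \<Rightarrow> complex mat" where
  "U_odd n = mat (n * 4) (n * 4) (\<lambda>(p, q).
     if p div 4 < 5 \<and> q div 4 < 5 then U5 $$ (p, q)
     else if 5 \<le> p div 4 \<and> q div 4 = pair_partner (p div 4) \<and> p mod 4 = q mod 4 then pair_sign (p div 4)
     else 0)"

lemma U_odd_carrier_mat[simp]: "U_odd n \<in> carrier_mat (n * 4) (n * 4)"
  by (simp add: U_odd_def)

lemma index_U_odd:
  "x < n \<Longrightarrow> y < n \<Longrightarrow> c < 4 \<Longrightarrow> d < 4 \<Longrightarrow> U_odd n $$ (x * 4 + c, y * 4 + d) =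
     (if x < 5 \<and> y < 5 then U5 $$ (x * 4 + c, y * 4 + d)
      else if 5 \<le> x \<and> y = pair_partner x \<and> c = d then pair_sign x else 0)"
  by (simp add: U_odd_def block_index_less)

lemma U_odd_inner_small:
  assumes "5 \<le> n" "y < 5" "z < 5" "d < 4" "e < 4"
  shows "(\<Sum>t<n. \<Sum>c<4. cnj (U_odd n $$ (t * 4 + c, y * 4 + d)) * U_odd n $$ (t * 4 + c, z * 4 + e)) =
    (if y = z \<and> d = e then 1 else 0)"
proof -
  have yz: "y * 4 + d < 20" "z * 4 + e < 20"
    using assms block_index_less[of y 5 d 4] block_index_less[of z 5 e 4] by simp_all
  have "(\<Sum>t<n. \<Sum>c<4. cnj (U_odd n $$ (t * 4 + c, y * 4 + d)) * U_odd n $$ (t * 4 + c, z * 4 + e)) =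
      (\<Sum>t<5. \<Sum>c<4. cnj (U_odd n $$ (t * 4 + c, y * 4 + d)) * U_odd n $$ (t * 4 + c, z * 4 + e))"
    using assms by (intro sum.mono_neutral_right) (auto simp: index_U_odd pair_partner_neq_small)
  also have "\<dots> = (\<Sum>t<5. \<Sum>c<4. cnj (U5 $$ (t * 4 + c, y * 4 + d)) * U5 $$ (t * 4 + c, z * 4 + e))"
    using assms by (intro sum.cong refl) (auto simp: index_U_odd)
  also have "\<dots> = (adj U5 * U5) $$ (y * 4 + d, z * 4 + e)"
    using U5_carrier_mat yz by (simp del: index_mult_mat(1) add: index_adj_mult_block[of U5 5 4])
  also have "\<dots> = (if y = z \<and> d = e then 1 else 0)"
    using U5_unitary yz assms by (simp add: unitary_def block_index_eq_iff)
  finally show ?thesis .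
qed

lemma U_odd_inner_large:
  assumes n: "odd n" and yz: "5 \<le> y" "5 \<le> z" "y < n" "z < n" "d < 4" "e < 4"
  shows "(\<Sum>t<n. \<Sum>c<4. cnj (U_odd n $$ (t * 4 + c, y * 4 + d)) * U_odd n $$ (t * 4 + c, z * 4 + e)) =
    (if y = z \<and> d = e then 1 else 0)"
proof -
  have "(\<Sum>t<n. \<Sum>c<4. cnj (U_odd n $$ (t * 4 + c, y * 4 + d)) * U_odd n $$ (t * 4 + c, z * 4 + e)) =
      (\<Sum>t<n. if t = pair_partner y then (if y = z \<and> d = e then 1 else 0) else 0)"
  proof (intro sum.cong refl)
    fix t assume t: "t \<in> {..<n}"
    show "(\<Sum>c<4. cnj (U_odd n $$ (t * 4 + c, y * 4 + d)) * U_odd n $$ (t * 4 + c, z * 4 + e)) =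
        (if t = pair_partner y then (if y = z \<and> d = e then 1 else 0) else 0)"
    proof (cases "t = pair_partner y")
      case True
      then have "5 \<le> t" "pair_partner t = y" using yz pair_partner_ge pair_partner_partner by auto
      then have "(\<Sum>c<4. cnj (U_odd n $$ (t * 4 + c, y * 4 + d)) * U_odd n $$ (t * 4 + c, z * 4 + e)) =
          (\<Sum>c<4::nat. if c = d then (if y = z \<and> d = e then 1 else 0) else 0)"
        using yz t by (intro sum.cong refl) (auto simp: index_U_odd cnj_pair_sign_sq)
      then show ?thesis using True yz by simp
    next
      case False
      then show ?thesis
        using yz t pair_partner_eq_iff by (auto simp: index_U_odd intro!: sum.neutral)
    qed
  qed
  also have "\<dots> = (if y = z \<and> d = e then 1 else 0)"
    using pair_partner_less[OF n yz(1,3)] by simp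
  finally show ?thesis .
qed

lemma U_odd_unitary:
  assumes n: "odd n" "5 \<le> n"
  shows "unitary (n * 4) (U_odd n)"
proof (rule unitaryI_left[OF U_odd_carrier_mat], rule eq_block_matI)
  fix y z d e :: nat assume yz: "y < n" "z < n" "d < 4" "e < 4"
  have "(adj (U_odd n) * U_odd n) $$ (y * 4 + d, z * 4 + e) =
      (\<Sum>t<n. \<Sum>c<4. cnj (U_odd n $$ (t * 4 + c, y * 4 + d)) * U_odd n $$ (t * 4 + c, z * 4 + e))"
    using yz by (simp del: index_mult_mat(1) add: index_adj_mult_block block_index_less)
  also have "\<dots> = (if y = z \<and> d = e then 1 else 0)"
  proof -
    consider "y < 5" "z < 5" | "y < 5 \<or> z < 5" "\<not> (y < 5 \<and> z < 5)" | "5 \<le> y" "5 \<le> z"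
      by linarith
    then show ?thesis
    proof cases
      case 1
      then show ?thesis using U_odd_inner_small n yz by blast
    next
      case 2
      then show ?thesis using yz by (auto simp: index_U_odd pair_partner_neq_small intro!: sum.neutral)
    next
      case 3
      then show ?thesis using U_odd_inner_large n yz by blast
    qed
  qed
  also have "\<dots> = 1\<^sub>m (n * 4) $$ (y * 4 + d, z * 4 + e)"
    using yz by (auto simp: block_index_less block_index_eq_iff)
  finally show "(adj (U_odd n) * U_odd n) $$ (y * 4 + d, z * 4 + e) = 1\<^sub>m (n * 4) $$ (y * 4 + d, z * 4 + e)" .
qed (simp_all add: mult_carrier_mat[OF adj_carrier_mat[OF U_odd_carrier_mat] U_odd_carrier_mat])

lemma conj_kernel_U_odd_small:
  assumes "t < 5" "t' < 5" "r < 5" "s < 5" "5 \<le> n"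
  shows "conj_kernel 4 (U_odd n) t t' r s = hw_kernel 5 t t' r s"
proof -
  have "conj_kernel 4 (U_odd n) t t' r s = conj_kernel 4 U5 t t' r s"
    unfolding conj_kernel_def using assms
    by (intro arg_cong[where f = "\<lambda>z. z / of_nat 4"] sum.cong refl) (simp add: index_U_odd)
  then show ?thesis using conj_kernel_U5 assms by simp
qed

lemma index_U_odd_diag_block:
  "5 \<le> x \<Longrightarrow> x < n \<Longrightarrow> c < 4 \<Longrightarrow> d < 4 \<Longrightarrow> U_odd n $$ (x * 4 + c, x * 4 + d) = 0"
  using pair_partner_neq[of x] by (simp add: index_U_odd)

lemma index_U_odd_antisym:
  assumes "x < n" "y < n" "x \<noteq> y" "\<not> (x < 5 \<and> y < 5)" "c < 4" "d < 4"
  shows "U_odd n $$ (x * 4 + c, y * 4 + d) = - U_odd n $$ (y * 4 + c, x * 4 + d)"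
proof (cases "x < 5 \<or> y < 5")
  case True
  then show ?thesis using assms pair_partner_ge[of x] pair_partner_ge[of y] by (auto simp: index_U_odd)
next
  case False
  then have "5 \<le> x" "5 \<le> y" by auto
  then show ?thesis
    using assms pair_partner_eq_iff[of x y] pair_sign_partner[of x] by (auto simp: index_U_odd)
qed

lemma twirl_conj_kernel_U_odd:
  assumes n: "odd n" "5 \<le> n" and idx: "t < n" "t' < n" "r < n" "s < n"
  shows "twirl n (conj_kernel 4 (U_odd n)) t t' r s = hw_kernel n t t' r s"
proof (rule twirl_eq_hw_kernel[OF _ _ _ _ _ idx])
  let ?\<kappa> = "conj_kernel 4 (U_odd n)"
  show "2 \<le> n" using n by simp
  show "?\<kappa> x x x x = 0" if "x < n" for x
  proof (cases "x < 5")
    case True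
    then show ?thesis using conj_kernel_U_odd_small[OF True True True True n(2)] by (simp add: hw_kernel_def)
  qed (use that in \<open>simp add: conj_kernel_def index_U_odd_diag_block\<close>)
  show "?\<kappa> x y x y = 0" if "x < n" "y < n" "x \<noteq> y" for x y
  proof (cases "x < 5 \<and> y < 5")
    case True
    then show ?thesis using conj_kernel_U_odd_small[of x y x y n] n that by (simp add: hw_kernel_def)
  qed (use that in \<open>auto simp: conj_kernel_def index_U_odd_diag_block\<close>)
  show "?\<kappa> y x x y = - ?\<kappa> y y x x" if "x < n" "y < n" "x \<noteq> y" for x y
  proof (cases "x < 5 \<and> y < 5")
    case True
    then show ?thesis using conj_kernel_U_odd_small[of y x x y n] conj_kernel_U_odd_small[of y y x x n] n that
      by (simp add: hw_kernel_def)
  next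
    case False
    then show ?thesis using that
      by (simp add: conj_kernel_def index_U_odd_antisym[of x n y] sum_negf)
  qed
  show "(\<Sum>t<n. ?\<kappa> t t r r) = 1" if "r < n" for r
    using U_odd_unitary[OF n] that by (intro conj_kernel_diag_sum) (auto simp: unitary_def)
qed

section \<open>The conditional expectation onto \<open>M\<^sub>n \<otimes> 1\<close>\<close>

text \<open>The products \<open>\<sigma> \<otimes> \<sigma>'\<close> of the real matrices \<open>1, X, Z, XZ\<close>: an orthogonal basis of
  \<open>M\<^sub>4\<close> made of unitaries, so that averaging the conjugations by \<open>1 \<otimes> \<sigma> \<otimes> \<sigma>'\<close> gives
  \<open>id \<otimes> \<tau>\<^sub>4\<close>.\<close>

definition pauli2 :: "nat \<Rightarrow> nat \<Rightarrow> nat \<Rightarrow> int" where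
  "pauli2 \<alpha> x y =
     (if \<alpha> = 0 then (if x = y then 1 else 0)
      else if \<alpha> = 1 then (if x \<noteq> y then 1 else 0)
      else if \<alpha> = 2 then (if x = y then (if x = 0 then 1 else -1) else 0)
      else (if x = 0 \<and> y = 1 then -1 else if x = 1 \<and> y = 0 then 1 else 0))"

definition pauli4 :: "nat \<Rightarrow> nat \<Rightarrow> nat \<Rightarrow> int" where
  "pauli4 g a c = pauli2 (g div 4) (a div 2) (c div 2) * pauli2 (g mod 4) (a mod 2) (c mod 2)"

definition pauli4_orthogonal :: bool where
  "pauli4_orthogonal \<longleftrightarrow> (\<forall>g\<in>set [0..<16]. \<forall>a\<in>set [0..<4]. \<forall>b\<in>set [0..<4].
     (\<Sum>c\<leftarrow>[0..<4]. pauli4 g c a * pauli4 g c b) = (if a = b then 1 else 0))"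

definition pauli4_complete :: bool where
  "pauli4_complete \<longleftrightarrow> (\<forall>a\<in>set [0..<4]. \<forall>b\<in>set [0..<4]. \<forall>c\<in>set [0..<4]. \<forall>d\<in>set [0..<4].
     (\<Sum>g\<leftarrow>[0..<16]. pauli4 g a c * pauli4 g b d) = (if a = b \<and> c = d then 4 else 0))"

lemma pauli4_orthogonal: pauli4_orthogonal
  by code_simp

lemma pauli4_complete: pauli4_complete
  by code_simp

lemma sum_list_map_upt: "(\<Sum>k\<leftarrow>[0..<n]. f k) = (\<Sum>k<n. f k)"
  by (simp add: sum_set_upt_conv_sum_list_nat[symmetric] atLeast0LessThan)

lemma pauli4_orthogonal_entry:
  "g < 16 \<Longrightarrow> a < 4 \<Longrightarrow> b < 4 \<Longrightarrow>
   (\<Sum>c<4. (of_int (pauli4 g c a) :: complex) * of_int (pauli4 g c b)) = (if a = b then 1 else 0)"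
  using pauli4_orthogonal unfolding pauli4_orthogonal_def sum_list_map_upt
  by (simp flip: of_int_mult of_int_sum)

lemma pauli4_complete_entry:
  "a < 4 \<Longrightarrow> b < 4 \<Longrightarrow> c < 4 \<Longrightarrow> d < 4 \<Longrightarrow>
   (\<Sum>g<16. (of_int (pauli4 g a c) :: complex) * of_int (pauli4 g b d)) = (if a = b \<and> c = d then 4 else 0)"
  using pauli4_complete unfolding pauli4_complete_def sum_list_map_upt
  by (simp flip: of_int_mult of_int_sum)

definition pauli_block :: "nat \<Rightarrow> nat \<Rightarrow> complex mat" where
  "pauli_block n g = kron n 4 (1\<^sub>m n) (mat 4 4 (\<lambda>(a, c). of_int (pauli4 g a c)))"

lemma pauli_block_carrier_mat[simp]: "pauli_block n g \<in> carrier_mat (n * 4) (n * 4)"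
  by (simp add: pauli_block_def)

lemma index_pauli_block:
  "x < n \<Longrightarrow> y < n \<Longrightarrow> a < 4 \<Longrightarrow> c < 4 \<Longrightarrow>
   pauli_block n g $$ (x * 4 + a, y * 4 + c) = (if x = y then of_int (pauli4 g a c) else 0)"
  by (simp add: pauli_block_def index_kron)

lemma unitary_pauli_block:
  assumes "g < 16"
  shows "unitary (n * 4) (pauli_block n g)"
proof (rule unitaryI_left[OF pauli_block_carrier_mat], rule eq_block_matI)
  fix x y a b :: nat assume xy: "x < n" "y < n" "a < 4" "b < 4"
  have "(adj (pauli_block n g) * pauli_block n g) $$ (x * 4 + a, y * 4 + b) =
      (\<Sum>t<n. if t = x then (if x = y then (\<Sum>c<4. of_int (pauli4 g c a) * of_int (pauli4 g c b)) else 0) else 0)"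
    unfolding index_adj_mult_block[OF pauli_block_carrier_mat pauli_block_carrier_mat
        block_index_less[OF xy(1,3)] block_index_less[OF xy(2,4)]]
    using xy by (intro sum.cong refl) (auto simp: index_pauli_block)
  also have "\<dots> = 1\<^sub>m (n * 4) $$ (x * 4 + a, y * 4 + b)"
    using xy assms by (auto simp: pauli4_orthogonal_entry block_index_less block_index_eq_iff)
  finally show "(adj (pauli_block n g) * pauli_block n g) $$ (x * 4 + a, y * 4 + b) =
      1\<^sub>m (n * 4) $$ (x * 4 + a, y * 4 + b)" .
qed (simp_all add: mult_carrier_mat[OF adj_carrier_mat[OF pauli_block_carrier_mat] pauli_block_carrier_mat])

lemma index_conj_pauli_block:
  assumes X: "X \<in> carrier_mat (n * 4) (n * 4)" and xy: "x < n" "y < n" "a < 4" "b < 4"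
  shows "(adj (pauli_block n g) * X * pauli_block n g) $$ (x * 4 + a, y * 4 + b) =
    (\<Sum>c<4. \<Sum>c'<4. of_int (pauli4 g c a) * X $$ (x * 4 + c, y * 4 + c') * of_int (pauli4 g c' b))"
proof -
  have "(adj (pauli_block n g) * X * pauli_block n g) $$ (x * 4 + a, y * 4 + b) = (\<Sum>t<n. \<Sum>c<4.
      if t = x then (\<Sum>c'<4. of_int (pauli4 g c a) * X $$ (x * 4 + c, y * 4 + c') * of_int (pauli4 g c' b)) else 0)"
    unfolding index_conj_block[OF pauli_block_carrier_mat X block_index_less[OF xy(1,3)] block_index_less[OF xy(2,4)]]
  proof (intro sum.cong refl)
    fix t c assume "t \<in> {..<n}" "c \<in> {..<4::nat}"
    then have "(\<Sum>t'<n. \<Sum>c'<4. cnj (pauli_block n g $$ (t * 4 + c, x * 4 + a)) * X $$ (t * 4 + c, t' * 4 + c') *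
          pauli_block n g $$ (t' * 4 + c', y * 4 + b)) = (\<Sum>t'<n. if t' = y then (if t = x then
          (\<Sum>c'<4. of_int (pauli4 g c a) * X $$ (x * 4 + c, y * 4 + c') * of_int (pauli4 g c' b)) else 0) else 0)"
      using xy by (intro sum.cong refl) (auto simp: index_pauli_block)
    then show "(\<Sum>t'<n. \<Sum>c'<4. cnj (pauli_block n g $$ (t * 4 + c, x * 4 + a)) * X $$ (t * 4 + c, t' * 4 + c') *
          pauli_block n g $$ (t' * 4 + c', y * 4 + b)) = (if t = x then
          (\<Sum>c'<4. of_int (pauli4 g c a) * X $$ (x * 4 + c, y * 4 + c') * of_int (pauli4 g c' b)) else 0)"
      using xy by simp
  qed
  also have "\<dots> = (\<Sum>t<n. if t = x then (\<Sum>c<4. \<Sum>c'<4.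
      of_int (pauli4 g c a) * X $$ (x * 4 + c, y * 4 + c') * of_int (pauli4 g c' b)) else 0)"
    by (intro sum.cong refl) simp
  also have "\<dots> = (\<Sum>c<4. \<Sum>c'<4. of_int (pauli4 g c a) * X $$ (x * 4 + c, y * 4 + c') * of_int (pauli4 g c' b))"
    using xy by simp
  finally show ?thesis .
qed

definition cond_exp :: "nat \<Rightarrow> complex mat \<Rightarrow> complex mat" where
  "cond_exp n X = kron n 4 (id_tensor_ntr n 4 X) (1\<^sub>m 4)"

lemma cond_exp_eq_pauli_average:
  assumes X: "X \<in> carrier_mat (n * 4) (n * 4)"
  shows "cond_exp n X = mat_comb (n * 4) {..<16} (\<lambda>_. complex_of_real (1 / 16))
    (\<lambda>g. adj (pauli_block n g) * X * pauli_block n g)"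
proof (rule eq_block_matI)
  fix x y a b :: nat assume xy: "x < n" "y < n" "a < 4" "b < 4"
  have "mat_comb (n * 4) {..<16} (\<lambda>_. complex_of_real (1 / 16))
      (\<lambda>g. adj (pauli_block n g) * X * pauli_block n g) $$ (x * 4 + a, y * 4 + b) =
    (\<Sum>g<16. (\<Sum>c<4. \<Sum>c'<4. of_int (pauli4 g c a) * X $$ (x * 4 + c, y * 4 + c') * of_int (pauli4 g c' b))) / 16"
    using xy by (simp add: index_mat_comb block_index_less index_conj_pauli_block[OF X] sum_divide_distrib)
  also have "\<dots> = (\<Sum>c<4. \<Sum>c'<4. X $$ (x * 4 + c, y * 4 + c') *
      (\<Sum>g<16. of_int (pauli4 g c a) * of_int (pauli4 g c' b))) / 16"
    by (simp add: sum_distrib_left sum.swap[of _ "{..<16::nat}"] ac_simps)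
  also have "\<dots> = (\<Sum>c<4. \<Sum>c'<4. if c' = c then (if a = b then X $$ (x * 4 + c, y * 4 + c) * 4 else 0) else 0) / 16"
    using xy by (intro arg_cong[where f = "\<lambda>z. z / 16"] sum.cong refl) (auto simp: pauli4_complete_entry)
  also have "\<dots> = cond_exp n X $$ (x * 4 + a, y * 4 + b)"
    using xy by (simp add: cond_exp_def index_kron id_tensor_ntr_def sum_distrib_left sum_distrib_right mult.commute)
  finally show "cond_exp n X $$ (x * 4 + a, y * 4 + b) = mat_comb (n * 4) {..<16} (\<lambda>_. complex_of_real (1 / 16))
    (\<lambda>g. adj (pauli_block n g) * X * pauli_block n g) $$ (x * 4 + a, y * 4 + b)" by simp
qed (simp_all add: cond_exp_def)

lemma in_conv_Aut_cond_exp: "in_conv_Aut (n * 4) (cond_exp n)"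
proof (rule in_conv_Aut_cong)
  show "in_conv_Aut (n * 4) (\<lambda>X. mat_comb (n * 4) {..<16} (\<lambda>_. complex_of_real (1 / 16))
      (\<lambda>g. adj (pauli_block n g) * X * pauli_block n g))"
    by (rule in_conv_Aut_convex) (simp_all add: in_conv_Aut_conj unitary_pauli_block)
qed (rule cond_exp_eq_pauli_average)

lemma cond_exp_conj_cond_exp:
  assumes "V \<in> carrier_mat (n * 4) (n * 4)"
  shows "cond_exp n (adj V * cond_exp n X * V) =
    kron n 4 (kernel_map n (conj_kernel 4 V) (id_tensor_ntr n 4 X)) (1\<^sub>m 4)"
proof -
  have "id_tensor_ntr n 4 X \<in> carrier_mat n n" by (simp add: id_tensor_ntr_def)
  then show ?thesis unfolding cond_exp_def by (simp add: id_tensor_ntr_conj_kron[OF assms])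
qed

lemma in_conv_Aut_cond_exp_conj:
  "unitary (n * 4) V \<Longrightarrow> in_conv_Aut (n * 4) (\<lambda>X. cond_exp n (adj V * cond_exp n X * V))"
  using in_conv_Aut_comp[OF in_conv_Aut_comp[OF in_conv_Aut_cond_exp in_conv_Aut_conj] in_conv_Aut_cond_exp] .

lemma holevo_werner_factorizable_odd:
  assumes n: "odd n" "5 \<le> n"
  shows "HW_factorizable_deg n 4"
proof -
  define J where "J = {\<sigma>. \<sigma> permutes {..<n}} \<times> Pow {..<n}"
  define V where "V j = signed_perm_conj n 4 (fst j) (snd j) (U_odd n)" for j
  define w where "w j = 1 / real (card J)" for j :: "(nat \<Rightarrow> nat) \<times> nat set"
  have "finite J" by (simp add: J_def finite_permutations)
  moreover have "(id, {}) \<in> J" by (simp add: J_def)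
  ultimately have w: "sum w J = 1" by (auto simp: w_def)
  have V: "unitary (n * 4) (V j)" if "j \<in> J" for j
    using that U_odd_unitary[OF n] unitary_signed_perm_conj by (auto simp: J_def V_def)
  let ?\<Phi> = "\<lambda>X. mat_comb (n * 4) J (\<lambda>j. complex_of_real (w j)) (\<lambda>j. cond_exp n (adj (V j) * cond_exp n X * V j))"
  have "in_conv_Aut (n * 4) ?\<Phi>"
    using \<open>finite J\<close> w V by (intro in_conv_Aut_convex in_conv_Aut_cond_exp_conj) (auto simp: w_def)
  moreover have "tensor_map n 4 (holevo_werner n) (depol 4) X = ?\<Phi> X" if X: "X \<in> carrier_mat (n * 4) (n * 4)" for X
  proof -
    let ?Y = "id_tensor_ntr n 4 X"
    have "?Y \<in> carrier_mat n n" by (simp add: id_tensor_ntr_def)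
    then have "tensor_map n 4 (holevo_werner n) (depol 4) X = kron n 4 (kernel_map n (hw_kernel n) ?Y) (1\<^sub>m 4)"
      unfolding tensor_map_holevo_werner_depol[OF X] by (simp add: holevo_werner_eq_kernel_map)
    also have "\<dots> = kron n 4 (kernel_map n
        (\<lambda>t t' r s. \<Sum>j\<in>J. complex_of_real (w j) * conj_kernel 4 (V j) t t' r s) ?Y) (1\<^sub>m 4)"
    proof (intro arg_cong[where f = "\<lambda>Z. kron n 4 Z (1\<^sub>m 4)"] kernel_map_cong)
      fix t t' r s assume idx: "t < n" "t' < n" "r < n" "s < n"
      show "hw_kernel n t t' r s = (\<Sum>j\<in>J. complex_of_real (w j) * conj_kernel 4 (V j) t t' r s)"
        using twirl_conj_kernel_U_odd[OF n idx] twirl_eq_average_conj_kernel[OF idx, of 4 "U_odd n"]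
        by (simp add: J_def V_def w_def)
    qed
    also have "\<dots> = ?\<Phi> X"
      using V by (auto simp: mat_comb_kron_kernel_map[symmetric] cond_exp_conj_cond_exp unitary_def
          intro: mat_comb_cong)
    finally show ?thesis .
  qed
  ultimately show ?thesis
    unfolding HW_factorizable_deg_def by (rule in_conv_Aut_cong)
qed

theorem theorem5p2:
  shows "(\<exists>u. unitary (5*4) u \<and>
            (\<forall>x \<in> carrier_mat 5 5.
               holevo_werner 5 x = id_tensor_ntr 5 4 (adj u * kron 5 4 x (1\<^sub>m 4) * u)))
       \<and> (\<forall>n::nat. odd n \<and> n \<ge> 5 \<longrightarrow> HW_factorizable_deg n 4)"
  using holevo_werner_5_factorization holevo_werner_factorizable_odd by blast

end
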